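(* Let $\delta\in(0,1)$, $c>2\sqrt{rd}$ and $h>0$, and define $\pi_{\delta,c,h}(\xi)=\pi_{\delta,c}(\xi)+h\xi$. Then $$-d\,\pi_{\delta,c,h}''-c\,\pi_{\delta,c,h}'\le r\,\pi_{\delta,c,h}\big(1-\delta-\pi_{\delta,c,h}\big)\quad\text{on }\Big[-\sqrt{\tfrac{c}{rh}},\sqrt{\tfrac{c}{rh}}\Big].$$ Furthermore, there exists $h^\star>0$ such that for all $h\in(0,h^\star]$, $$\max_{[-\sqrt{c/(rh)},0]}\pi_{\delta,c,h}\ge1-2\delta\quad\text{and}\quad\max_{[-\sqrt{c/(rh)},0]}\pi_{\delta,c,h}>\max\Big(\pi_{\delta,c,h}(0),\ \pi_{\delta,c,h}\big(-\sqrt{\tfrac{c}{rh}}\big)\Big).$$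
   Context: Fixed parameters $d>0$, $r>0$. For $\delta\in[0,1)$ and $c\ge2\sqrt{rd}$, $\pi_{\delta,c}$ denotes the unique decreasing traveling wave profile with speed $c$ of the scalar equation $\partial_tv-d\partial_{xx}v=rv(1-\delta-v)$, i.e. the solution of $-d\pi''-c\pi'=r\pi(1-\delta-\pi)$ on $\mathbb{R}$ with $\pi(-\infty)=1-\delta$, $\pi(+\infty)=0$, normalized by $\pi_{\delta,c}(0)=\frac{1-\delta}{2}$. *)

theory Defs
  imports "HOL-Analysis.Analysis"
begin

text \<open>A decreasing traveling wave profile with speed c of
  v_t - d v_xx = r v (1 - delta - v): a twice differentiable solution of
  -d p'' - c p' = r p (1 - delta - p) on the real line, with
  p(-inf) = 1 - delta, p(+inf) = 0, decreasing, normalized by p 0 = (1 - delta)/2.\<close>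

definition is_tw_profile :: "real \<Rightarrow> real \<Rightarrow> real \<Rightarrow> real \<Rightarrow> (real \<Rightarrow> real) \<Rightarrow> bool" where
  "is_tw_profile d r \<delta> c p \<longleftrightarrow>
     (\<forall>x. (p has_real_derivative deriv p x) (at x)) \<and>
     (\<forall>x. (deriv p has_real_derivative deriv (deriv p) x) (at x)) \<and>
     (\<forall>x. - d * deriv (deriv p) x - c * deriv p x = r * p x * (1 - \<delta> - p x)) \<and>
     (p \<longlongrightarrow> 1 - \<delta>) at_bot \<and>
     (p \<longlongrightarrow> 0) at_top \<and>
     (\<forall>x y. x < y \<longrightarrow> p y < p x) \<and>
     p 0 = (1 - \<delta>) / 2"

text \<open>pi_{delta,c}: the unique such profile (for delta in [0,1), c >= 2 sqrt(r d)).\<close>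
definition tw_profile :: "real \<Rightarrow> real \<Rightarrow> real \<Rightarrow> real \<Rightarrow> real \<Rightarrow> real" where
  "tw_profile d r \<delta> c = (THE p. is_tw_profile d r \<delta> c p)"

definition tw_profile_h :: "real \<Rightarrow> real \<Rightarrow> real \<Rightarrow> real \<Rightarrow> real \<Rightarrow> real \<Rightarrow> real" where
  "tw_profile_h d r \<delta> c h = (\<lambda>\<xi>. tw_profile d r \<delta> c \<xi> + h * \<xi>)"

end

theory Submission
  imports Defs
begin

text \<open>With \<open>a = 1 - \<delta>\<close> and \<open>q(\<xi>) = \<pi>(\<xi>) + h \<xi>\<close>, the profile equation turns the defect of \<open>q\<close>
  into \<open>h (c + r \<xi> (a - 2 \<pi>(\<xi>)) - r h \<xi>\<^sup>2)\<close>. The middle term is nonnegative because \<open>\<pi> - a/2\<close> has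
  the sign of \<open>-\<xi>\<close>, so \<open>q\<close> is a subsolution wherever \<open>r h \<xi>\<^sup>2 \<le> c\<close>.

  For the second claim let \<open>L = \<surd>(c/(r h))\<close> and \<open>t = L/2\<close>, so that \<open>h t = c/(4 r t)\<close>. The flux
  \<open>-d \<pi>' - c \<pi>\<close> is increasing with derivative \<open>r \<pi> (a - \<pi>)\<close> and bounded below, which makes
  the reaction term integrable at \<open>-\<infinity>\<close> and yields \<open>t (a - \<pi>(-t)) \<rightarrow> 0\<close>. Hence for small \<open>h\<close>
  the value \<open>q(-t)\<close> is close to \<open>a\<close> and exceeds both \<open>q(0) = a/2\<close> and \<open>q(-L)\<close>.

  Because \<open>\<pi>\<^sub>\<delta>\<^sub>,\<^sub>c\<close> is defined by a definite description, its existence and uniqueness are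
  proved as well. Uniqueness compares the slopes of two profiles at equal levels: the
  difference of their squares cannot decrease to the left while positive, yet both slopes
  vanish along a sequence tending to \<open>-\<infinity>\<close>. Existence follows by monotone iteration of the
  Green operator of
  \<open>-d w'' - c w' + M w\<close> between an exponential supersolution and subsolution.\<close>

section \<open>Monotone fronts\<close>

lemma has_real_derivative_nonpos_if_antimono:
  fixes f :: "real \<Rightarrow> real"
  assumes antimono: "\<And>x y. x \<le> y \<Longrightarrow> f y \<le> f x"
    and der: "(f has_real_derivative D) (at x)"
  shows "D \<le> 0"
proof (rule ccontr)
  assume "\<not> D \<le> 0"
  then obtain e where "e > 0" and e: "\<And>h. 0 < h \<Longrightarrow> h < e \<Longrightarrow> f x < f (x + h)"
    using DERIV_pos_inc_right[OF der] by force
  then have "f x < f (x + e / 2)" by simp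
  with antimono[of x "x + e / 2"] \<open>e > 0\<close> show False by simp
qed

lemma ge_at_left_if_deriv_nonpos_where_pos:
  fixes E E' :: "real \<Rightarrow> real"
  assumes der: "\<And>x. (E has_real_derivative E' x) (at x)"
    and nonpos: "\<And>x. E x > 0 \<Longrightarrow> E' x \<le> 0"
    and pos: "E x0 > 0" and le: "x \<le> x0"
  shows "E x0 \<le> E x"
proof (rule ccontr)
  assume "\<not> E x0 \<le> E x"
  define v where "v = (max (E x) 0 + E x0) / 2"
  have v: "E x < v" "v < E x0" "v > 0"
    using \<open>\<not> E x0 \<le> E x\<close> pos unfolding v_def by auto
  define S where "S = {x..x0} \<inter> {y. E y \<le> v}"
  have "continuous_on UNIV E"
    using der by (meson DERIV_isCont continuous_at_imp_continuous_on)
  then have "closed S"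
    unfolding S_def by (intro closed_Int closed_Collect_le) auto
  moreover have "x \<in> S" "bdd_above S"
    using le v unfolding S_def by auto
  ultimately have "Sup S \<in> S" using closed_contains_Sup by blast
  define s where "s = Sup S"
  have s: "E s \<le> v" "s \<le> x0" using \<open>Sup S \<in> S\<close> unfolding s_def S_def by auto
  with v have "s < x0" by (cases "s = x0") auto
  \<comment> \<open>\<open>s\<close> is the last point of \<open>[x, x\<^sub>0]\<close> with \<open>E \<le> v\<close>; beyond it \<open>E > v > 0\<close>,
      so \<open>E\<close> is nonincreasing there and cannot climb from \<open>v\<close> up to \<open>E x\<^sub>0\<close>.\<close>
  have above: "E y > v" if "s < y" "y \<le> x0" for y
  proof (rule ccontr)
    assume "\<not> E y > v"
    with that s \<open>Sup S \<in> S\<close> have "y \<in> S" unfolding S_def s_def by auto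
    then have "y \<le> s" unfolding s_def using \<open>bdd_above S\<close> by (rule cSup_upper)
    with that show False by simp
  qed
  obtain z where z: "s < z" "z < x0" "E x0 - E s = (x0 - s) * E' z"
    using MVT2[OF \<open>s < x0\<close>, of E E'] der by blast
  have "E' z \<le> 0" using above[of z] z v by (intro nonpos) simp
  then have "E x0 - E s \<le> 0" using z \<open>s < x0\<close> by (simp add: mult_nonneg_nonpos)
  with s v show False by simp
qed

locale monotone_front =
  fixes d r a c :: real and w :: "real \<Rightarrow> real"
  assumes d_pos: "d > 0" and r_pos: "r > 0" and c_nonneg: "c \<ge> 0"
    and has_deriv: "\<And>x. (w has_real_derivative deriv w x) (at x)"
    and has_deriv2: "\<And>x. (deriv w has_real_derivative deriv (deriv w) x) (at x)"
    and ode: "\<And>x. - d * deriv (deriv w) x - c * deriv w x = r * w x * (a - w x)"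
    and pos: "\<And>x. 0 < w x" and less: "\<And>x. w x < a"
    and antimono: "\<And>x y. x \<le> y \<Longrightarrow> w y \<le> w x"
    and tendsto_at_top: "(w \<longlongrightarrow> 0) at_top"
begin

lemma isCont: "isCont w x"
  using has_deriv DERIV_isCont by blast

lemma reaction_pos: "0 < r * w x * (a - w x)"
  using pos[of x] less[of x] r_pos by simp

lemma deriv_nonpos: "deriv w x \<le> 0"
  using antimono has_deriv by (rule has_real_derivative_nonpos_if_antimono)

lemma deriv_neg: "deriv w x < 0"
proof (rule ccontr)
  assume "\<not> deriv w x < 0"
  then have zero: "deriv w x = 0" using deriv_nonpos[of x] by simp
  \<comment> \<open>at a critical point the equation forces \<open>w'' < 0\<close>, so \<open>w'\<close> would be positive just to the left\<close>
  then have "d * deriv (deriv w) x < 0" using ode[of x] reaction_pos[of x] by simp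
  then have "deriv (deriv w) x < 0" using d_pos by (simp add: mult_less_0_iff)
  then obtain e where "e > 0" and e: "\<And>h. 0 < h \<Longrightarrow> h < e \<Longrightarrow> deriv w x < deriv w (x - h)"
    using DERIV_neg_dec_left[OF has_deriv2] by force
  then have "deriv w x < deriv w (x - e / 2)" by simp
  with deriv_nonpos[of "x - e / 2"] zero show False by simp
qed

lemma strict_antimono: "x < y \<Longrightarrow> w y < w x"
  using DERIV_neg_imp_decreasing[of x y w] has_deriv deriv_neg by blast

lemma has_deriv_shift: "((\<lambda>x. w (x + s)) has_real_derivative deriv w (x + s)) (at x)"
proof -
  have "((\<lambda>x. x + s) has_real_derivative 1) (at x)" by (auto intro!: derivative_eq_intros)
  from DERIV_chain2[OF has_deriv this] show ?thesis by simp
qed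

lemma deriv_shift: "deriv (\<lambda>x. w (x + s)) = (\<lambda>x. deriv w (x + s))"
  using has_deriv_shift DERIV_imp_deriv by blast

lemma has_deriv2_shift:
  "((\<lambda>x. deriv w (x + s)) has_real_derivative deriv (deriv w) (x + s)) (at x)"
proof -
  have "((\<lambda>x. x + s) has_real_derivative 1) (at x)" by (auto intro!: derivative_eq_intros)
  from DERIV_chain2[OF has_deriv2 this] show ?thesis by simp
qed

lemma shift: "monotone_front d r a c (\<lambda>x. w (x + s))"
proof
  show "((\<lambda>x. w (x + s)) has_real_derivative deriv (\<lambda>x. w (x + s)) x) (at x)" for x
    unfolding deriv_shift by (rule has_deriv_shift)
  show "(deriv (\<lambda>x. w (x + s)) has_real_derivative deriv (deriv (\<lambda>x. w (x + s))) x) (at x)" for x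
    unfolding deriv_shift using has_deriv2_shift DERIV_imp_deriv by metis
  show "- d * deriv (deriv (\<lambda>x. w (x + s))) x - c * deriv (\<lambda>x. w (x + s)) x
      = r * w (x + s) * (a - w (x + s))" for x
    unfolding deriv_shift DERIV_imp_deriv[OF has_deriv2_shift] by (rule ode)
  have "filterlim (\<lambda>x. x + s) at_top at_top"
    using filterlim_tendsto_add_at_top[OF tendsto_const[of s] filterlim_ident]
    by (simp add: add.commute)
  then show "((\<lambda>x. w (x + s)) \<longlongrightarrow> 0) at_top"
    using filterlim_compose[OF tendsto_at_top] by blast
qed (use d_pos r_pos c_nonneg pos less antimono in auto)

text \<open>The flux \<open>-d w' - c w\<close> has derivative \<open>r w (a - w) > 0\<close> and is bounded below by
  \<open>-c a\<close>; hence the reaction term is integrable at \<open>-\<infinity>\<close>, which drives both the limit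
  \<open>w(-\<infinity>) = a\<close> and the tail estimate below.\<close>

definition flux :: "real \<Rightarrow> real" where
  "flux x = - d * deriv w x - c * w x"

lemma has_deriv_flux: "(flux has_real_derivative r * w x * (a - w x)) (at x)"
proof -
  have "(flux has_real_derivative - d * deriv (deriv w) x - c * deriv w x) (at x)"
    unfolding flux_def[abs_def] by (auto intro!: derivative_eq_intros has_deriv has_deriv2)
  then show ?thesis using ode[of x] by simp
qed

lemma flux_lower_bound: "- c * a \<le> flux x"
proof -
  have "0 \<le> - d * deriv w x" using deriv_nonpos[of x] d_pos by (simp add: mult_nonneg_nonpos)
  moreover have "c * w x \<le> c * a" using less[of x] c_nonneg by (simp add: mult_left_mono)
  ultimately show ?thesis unfolding flux_def by simp
qed

lemma flux_increment_ge:
  assumes "x \<le> y" "y \<le> 0"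
  shows "(y - x) * (r * w 0 * (a - w x)) \<le> flux y - flux x"
proof (cases "x = y")
  case False
  with assms obtain z where z: "x < z" "z < y" "flux y - flux x = (y - x) * (r * w z * (a - w z))"
    using MVT2[of x y flux] has_deriv_flux by force
  have "w 0 \<le> w z" "a - w x \<le> a - w z" using z assms antimono by auto
  then have "r * w 0 * (a - w x) \<le> r * w z * (a - w z)"
    using r_pos pos[of 0] less[of x] by (intro mult_mono mult_left_mono) auto
  with z show ?thesis by (simp add: mult_left_mono)
qed simp

lemma flux_mono:
  assumes "x \<le> y" "y \<le> 0"
  shows "flux x \<le> flux y"
proof -
  have "0 \<le> (y - x) * (r * w 0 * (a - w x))"
    using assms r_pos pos[of 0] less[of x] by (intro mult_nonneg_nonneg) auto
  with flux_increment_ge[OF assms] show ?thesis by simp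
qed

lemma tendsto_at_bot: "(w \<longlongrightarrow> a) at_bot"
proof (rule order_tendstoI)
  show "\<forall>\<^sub>F x in at_bot. w x < y" if "a < y" for y
    using less that by (intro always_eventually allI) (blast intro: less_trans)
next
  fix y assume "y < a"
  show "\<forall>\<^sub>F x in at_bot. y < w x"
  proof (rule ccontr)
    assume "\<not> (\<forall>\<^sub>F x in at_bot. y < w x)"
    then have below: "w x \<le> y" for x
      unfolding eventually_at_bot_linorder by (meson antimono linorder_not_less nle_le order_trans)
    define \<kappa> where "\<kappa> = r * w 0 * (a - y)"
    have "\<kappa> > 0" unfolding \<kappa>_def using r_pos pos[of 0] \<open>y < a\<close> by simp
    define x where "x = - (\<bar>flux 0\<bar> + c * a + 1) / \<kappa>"
    have "c * a \<ge> 0" using c_nonneg less[of 0] pos[of 0] by simp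
    then have "x < 0" unfolding x_def using \<open>\<kappa> > 0\<close> by (simp add: divide_neg_pos add_pos_nonneg)
    have "(0 - x) * \<kappa> \<le> (0 - x) * (r * w 0 * (a - w x))"
      unfolding \<kappa>_def using \<open>x < 0\<close> below[of x] r_pos pos[of 0] by (intro mult_left_mono) auto
    also have "\<dots> \<le> flux 0 - flux x" using flux_increment_ge[of x 0] \<open>x < 0\<close> by simp
    finally have "\<bar>flux 0\<bar> + c * a + 1 \<le> flux 0 - flux x"
      unfolding x_def using \<open>\<kappa> > 0\<close> by simp
    with flux_lower_bound[of x] show False by linarith
  qed
qed

lemma flux_cauchy_at_bot:
  assumes "e > 0"
  obtains X where "X \<le> 0" "\<And>x y. x \<le> y \<Longrightarrow> y \<le> X \<Longrightarrow> flux y - flux x < e"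
proof -
  define m where "m = Inf (flux ` {..0})"
  have bdd: "bdd_below (flux ` {..0})"
    using flux_lower_bound by (intro bdd_belowI[of _ "- c * a"]) auto
  have "\<exists>v\<in>flux ` {..0}. v < m + e"
    unfolding m_def using assms by (intro cInf_lessD) auto
  then obtain X where X: "X \<le> 0" "flux X < m + e" by auto
  have "flux y - flux x < e" if "x \<le> y" "y \<le> X" for x y
  proof -
    have "m \<le> flux x" unfolding m_def using bdd that X by (intro cInf_lower) auto
    moreover have "flux y \<le> flux X" using flux_mono that X by simp
    ultimately show ?thesis using X by simp
  qed
  with X that show ?thesis by blast
qed

lemma tail_estimate:
  assumes "e > 0"
  obtains T where "T > 0" "\<And>t. T \<le> t \<Longrightarrow> t * (a - w (- t)) < e"
proof -
  define \<kappa> where "\<kappa> = r * w 0"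
  have "\<kappa> > 0" unfolding \<kappa>_def using r_pos pos[of 0] by simp
  obtain X where X: "X \<le> 0" "\<And>x y. x \<le> y \<Longrightarrow> y \<le> X \<Longrightarrow> flux y - flux x < e * \<kappa> / 2"
    using flux_cauchy_at_bot[of "e * \<kappa> / 2"] assms \<open>\<kappa> > 0\<close> by auto
  define T where "T = 1 - 2 * X"
  have "t * (a - w (- t)) < e" if "T \<le> t" for t
  proof -
    have t: "t > 0" "- (t / 2) \<le> X" using that X unfolding T_def by auto
    have "(t / 2) * (\<kappa> * (a - w (- t))) \<le> flux (- (t / 2)) - flux (- t)"
      using flux_increment_ge[of "- t" "- (t / 2)"] t unfolding \<kappa>_def by (simp add: algebra_simps)
    also have "\<dots> < e * \<kappa> / 2" using X t by simp
    finally have "\<kappa> * (t * (a - w (- t))) < \<kappa> * e" by (simp add: algebra_simps)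
    then show ?thesis using \<open>\<kappa> > 0\<close> by simp
  qed
  moreover have "T > 0" unfolding T_def using X by simp
  ultimately show ?thesis using that by blast
qed

lemma surj_onto_range:
  assumes "0 < y" "y < a"
  obtains x where "w x = y"
proof -
  have "\<forall>\<^sub>F x in at_bot. w x > y" using tendsto_at_bot assms(2) by (rule order_tendstoD)
  then obtain x1 where x1: "w x1 > y" unfolding eventually_at_bot_linorder by auto
  have "\<forall>\<^sub>F x in at_top. w x < y" using tendsto_at_top assms(1) by (rule order_tendstoD)
  then obtain x2 where x2: "x1 \<le> x2" "w x2 < y"
    unfolding eventually_at_top_linorder by (metis nle_le)
  show ?thesis using IVT2[of w x2 y x1] x1 x2 isCont that by force
qed

lemma small_deriv_left:
  assumes "e > 0"
  obtains x where "x \<le> x0" "\<bar>deriv w x\<bar> < e"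
proof -
  have "\<forall>\<^sub>F x in at_bot. w x > a - e" using tendsto_at_bot assms by (intro order_tendstoD) auto
  then obtain X where X: "\<And>x. x \<le> X \<Longrightarrow> w x > a - e" unfolding eventually_at_bot_linorder by auto
  define x1 where "x1 = min X x0 - 1"
  obtain z where z: "x1 < z" "z < x1 + 1" "w (x1 + 1) - w x1 = (x1 + 1 - x1) * deriv w z"
    using MVT2[of x1 "x1 + 1" w "deriv w"] has_deriv by auto
  have "w (x1 + 1) > a - e" using X[of "x1 + 1"] unfolding x1_def by auto
  with z less[of x1] deriv_neg[of z] have "\<bar>deriv w z\<bar> < e" by auto
  moreover have "z \<le> x0" using z unfolding x1_def by auto
  ultimately show ?thesis using that by blast
qed

end

section \<open>Uniqueness of the profile\<close>

locale two_fronts = P: monotone_front d r a c p + Q: monotone_front d r a c q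
  for d r a c :: real and p q :: "real \<Rightarrow> real"
begin

lemma level_map_exists:
  obtains \<tau> where "\<And>x. q (\<tau> x) = p x"
    and "\<And>x. (\<tau> has_real_derivative deriv p x / deriv q (\<tau> x)) (at x)"
proof -
  have inj: "q x = q y \<Longrightarrow> x = y" for x y
    using Q.strict_antimono by (metis less_irrefl linorder_cases)
  define \<sigma> where "\<sigma> y = (THE x. q x = y)" for y
  have q_\<sigma>: "q (\<sigma> y) = y" if y: "0 < y" "y < a" for y
  proof -
    obtain x where "q x = y" using Q.surj_onto_range[OF y] by blast
    with inj have "\<exists>!x. q x = y" by blast
    then show ?thesis unfolding \<sigma>_def by (rule theI')
  qed
  have \<sigma>_q: "\<sigma> (q x) = x" for x
    unfolding \<sigma>_def using inj by (intro the_equality) auto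
  have has_deriv_\<sigma>: "(\<sigma> has_real_derivative inverse (deriv q (\<sigma> y))) (at y)"
    if "0 < y" "y < a" for y
  proof (rule DERIV_inverse_function[where f = q and a = 0 and b = a])
    show "(q has_real_derivative deriv q (\<sigma> y)) (at (\<sigma> y))" by (rule Q.has_deriv)
    show "deriv q (\<sigma> y) \<noteq> 0" using Q.deriv_neg by (metis less_irrefl)
    have "isCont \<sigma> (q (\<sigma> y))"
      by (rule isCont_inverse_function[where d = 1]) (auto simp: \<sigma>_q Q.isCont)
    then show "isCont \<sigma> y" using q_\<sigma>[OF that] by simp
  qed (use that q_\<sigma> in auto)
  define \<tau> where "\<tau> x = \<sigma> (p x)" for x
  have "q (\<tau> x) = p x" for x unfolding \<tau>_def using q_\<sigma> P.pos P.less by blast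
  moreover have "(\<tau> has_real_derivative deriv p x / deriv q (\<tau> x)) (at x)" for x
    using DERIV_chain2[OF has_deriv_\<sigma> P.has_deriv, of x] P.pos P.less
    unfolding \<tau>_def by (simp add: field_simps)
  ultimately show ?thesis using that by blast
qed

context
  fixes \<tau> :: "real \<Rightarrow> real"
  assumes level: "\<And>x. q (\<tau> x) = p x"
    and has_deriv_\<tau>: "\<And>x. (\<tau> has_real_derivative deriv p x / deriv q (\<tau> x)) (at x)"
begin

text \<open>Both profiles solve the same equation as functions of their level, so at equal levels
  \<open>d (p'' - q''\<circ>\<tau>) = -c (p' - q'\<circ>\<tau>)\<close>.\<close>

lemma has_deriv_slope_gap:
  "((\<lambda>x. (deriv p x)\<^sup>2 - (deriv q (\<tau> x))\<^sup>2) has_real_derivative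
      - 2 * c * deriv p x * (deriv p x - deriv q (\<tau> x)) / d) (at x)"
proof -
  have "((\<lambda>x. deriv q (\<tau> x)) has_real_derivative
      deriv (deriv q) (\<tau> x) * (deriv p x / deriv q (\<tau> x))) (at x)"
    by (rule DERIV_chain2[OF Q.has_deriv2 has_deriv_\<tau>])
  then have "((\<lambda>x. (deriv p x)\<^sup>2 - (deriv q (\<tau> x))\<^sup>2) has_real_derivative
      2 * deriv p x * deriv (deriv p) x
      - 2 * deriv q (\<tau> x) * (deriv (deriv q) (\<tau> x) * (deriv p x / deriv q (\<tau> x)))) (at x)"
    by (auto intro!: derivative_eq_intros P.has_deriv2)
  moreover have "d * (deriv (deriv p) x - deriv (deriv q) (\<tau> x))
      = - c * (deriv p x - deriv q (\<tau> x))"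
    using P.ode[of x] Q.ode[of "\<tau> x"] level[of x] by (simp add: algebra_simps)
  moreover have "2 * A * P2 - 2 * B * (Q2 * (A / B)) = - 2 * c * A * (A - B) / d"
    if "B \<noteq> 0" "d * (P2 - Q2) = - c * (A - B)" for A B P2 Q2
  proof -
    have "P2 - Q2 = - c * (A - B) / d" using that(2) P.d_pos by (simp add: field_simps)
    then show ?thesis using that(1) by (simp add: field_simps)
  qed
  moreover have "deriv q (\<tau> x) \<noteq> 0" using Q.deriv_neg by (metis less_irrefl)
  ultimately show ?thesis by simp
qed

text \<open>Where \<open>|p'| > |q'\<circ>\<tau>|\<close> the gap of squared slopes is nonincreasing, so it would stay
  bounded away from \<open>0\<close> all the way to \<open>-\<infinity>\<close>, contradicting \<open>p' \<rightarrow> 0\<close> along a sequence.\<close>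

lemma deriv_square_le_at_level: "(deriv p x0)\<^sup>2 \<le> (deriv q (\<tau> x0))\<^sup>2"
proof (rule ccontr)
  define E where "E x = (deriv p x)\<^sup>2 - (deriv q (\<tau> x))\<^sup>2" for x
  assume "\<not> ?thesis"
  then have "E x0 > 0" unfolding E_def by simp
  define E' where "E' x = - 2 * c * deriv p x * (deriv p x - deriv q (\<tau> x)) / d" for x
  have has_deriv_E: "(E has_real_derivative E' x) (at x)" for x
    unfolding E_def[abs_def] E'_def by (rule has_deriv_slope_gap)
  have E'_nonpos: "E' x \<le> 0" if "E x > 0" for x
  proof -
    have "\<bar>deriv q (\<tau> x)\<bar> < \<bar>deriv p x\<bar>"
      using that abs_le_square_iff[of "deriv p x" "deriv q (\<tau> x)"] unfolding E_def by linarith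
    then have "deriv p x < deriv q (\<tau> x)" using P.deriv_neg[of x] Q.deriv_neg[of "\<tau> x"] by simp
    then have "0 \<le> deriv p x * (deriv p x - deriv q (\<tau> x))"
      using P.deriv_neg[of x] by (simp add: mult_nonpos_nonpos)
    then show ?thesis unfolding E'_def using P.c_nonneg P.d_pos
      by (simp add: divide_nonpos_pos mult_nonneg_nonneg)
  qed
  have E_ge: "E x0 \<le> E x" if "x \<le> x0" for x
    by (rule ge_at_left_if_deriv_nonpos_where_pos[OF has_deriv_E E'_nonpos \<open>E x0 > 0\<close> that])
  obtain x where x: "x \<le> x0" "\<bar>deriv p x\<bar> < sqrt (E x0)"
    using P.small_deriv_left[of "sqrt (E x0)" x0] \<open>E x0 > 0\<close> by auto
  have "E x \<le> \<bar>deriv p x\<bar>\<^sup>2" unfolding E_def by simp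
  also have "\<dots> < (sqrt (E x0))\<^sup>2" using x(2) by (intro power_strict_mono) auto
  also have "\<dots> = E x0" using \<open>E x0 > 0\<close> by simp
  finally show False using E_ge[OF x(1)] by simp
qed

end

end

lemma (in two_fronts) eq_if_eq_at_0:
  assumes "p 0 = q 0"
  shows "p = q"
proof -
  interpret swapped: two_fronts d r a c q p ..
  obtain \<tau> where \<tau>: "\<And>x. q (\<tau> x) = p x"
    and has_deriv_\<tau>: "\<And>x. (\<tau> has_real_derivative deriv p x / deriv q (\<tau> x)) (at x)"
    using level_map_exists by blast
  obtain \<rho> where \<rho>: "\<And>x. p (\<rho> x) = q x"
    and has_deriv_\<rho>: "\<And>x. (\<rho> has_real_derivative deriv q x / deriv p (\<rho> x)) (at x)"
    using swapped.level_map_exists by blast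
  have inj_p: "p x = p y \<Longrightarrow> x = y" and inj_q: "q x = q y \<Longrightarrow> x = y" for x y
    using P.strict_antimono Q.strict_antimono by (metis less_irrefl linorder_cases)+
  have "\<rho> (\<tau> x) = x" for x using \<rho> \<tau> inj_p by metis
  then have "(deriv p x)\<^sup>2 = (deriv q (\<tau> x))\<^sup>2" for x
    using deriv_square_le_at_level[OF \<tau> has_deriv_\<tau>, of x]
      swapped.deriv_square_le_at_level[OF \<rho> has_deriv_\<rho>, of "\<tau> x"] by simp
  then have abs_eq: "\<bar>deriv p x\<bar> = \<bar>deriv q (\<tau> x)\<bar>" for x using power2_eq_iff by fastforce
  have "deriv p x = deriv q (\<tau> x)" for x
    using abs_eq[of x] P.deriv_neg[of x] Q.deriv_neg[of "\<tau> x"] by simp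
  \<comment> \<open>hence \<open>\<tau>' = 1\<close>, and \<open>\<tau> 0 = 0\<close> since both profiles take the same value at \<open>0\<close>\<close>
  then have "((\<lambda>x. \<tau> x - x) has_real_derivative 0) (at x)" for x
    using DERIV_diff[OF has_deriv_\<tau> DERIV_ident, of x] Q.deriv_neg[of "\<tau> x"] by simp
  then have "\<tau> x - x = \<tau> 0 - 0" for x using DERIV_isconst_all by blast
  moreover have "\<tau> 0 = 0" using \<tau>[of 0] assms inj_q by metis
  ultimately show ?thesis using \<tau> by auto
qed

lemma is_tw_profile_imp_monotone_front:
  assumes "d > 0" "r > 0" "c \<ge> 0" and tw: "is_tw_profile d r \<delta> c p"
  shows "monotone_front d r (1 - \<delta>) c p"
proof -
  have strict: "x < y \<Longrightarrow> p y < p x" for x y using tw unfolding is_tw_profile_def by blast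
  have at_top: "(p \<longlongrightarrow> 0) at_top" and at_bot: "(p \<longlongrightarrow> 1 - \<delta>) at_bot"
    using tw unfolding is_tw_profile_def by blast+
  have "0 \<le> p x" for x
  proof (rule tendsto_upperbound[OF at_top])
    show "\<forall>\<^sub>F y in at_top. p y \<le> p x"
      unfolding eventually_at_top_linorder by (rule exI[of _ x]) (metis strict le_less order.refl)
  qed simp
  then have "0 < p x" for x using strict[of x "x + 1"] by (smt (verit))
  moreover have "p x \<le> 1 - \<delta>" for x
  proof (rule tendsto_lowerbound[OF at_bot])
    show "\<forall>\<^sub>F y in at_bot. p x \<le> p y"
      unfolding eventually_at_bot_linorder by (rule exI[of _ x]) (metis strict le_less order.refl)
  qed simp
  then have "p x < 1 - \<delta>" for x using strict[of "x - 1" x] by (smt (verit))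
  ultimately show ?thesis
    using assms strict unfolding is_tw_profile_def
    by unfold_locales (auto simp: le_less)
qed

lemma monotone_front_imp_is_tw_profile:
  assumes "monotone_front d r (1 - \<delta>) c p" "p 0 = (1 - \<delta>) / 2"
  shows "is_tw_profile d r \<delta> c p"
proof -
  interpret monotone_front d r "1 - \<delta>" c p by fact
  show ?thesis unfolding is_tw_profile_def
    using has_deriv has_deriv2 ode tendsto_at_bot tendsto_at_top strict_antimono assms(2) by blast
qed

lemma is_tw_profile_unique:
  assumes "d > 0" "r > 0" "c \<ge> 0" "is_tw_profile d r \<delta> c p" "is_tw_profile d r \<delta> c q"
  shows "p = q"
proof -
  interpret two_fronts d r "1 - \<delta>" c p q
    using assms by (intro two_fronts.intro is_tw_profile_imp_monotone_front)
  show ?thesis using assms(4,5) by (intro eq_if_eq_at_0) (simp add: is_tw_profile_def)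
qed

section \<open>Tail integrals against exponentials\<close>

definition laplace_tail :: "real \<Rightarrow> (real \<Rightarrow> real) \<Rightarrow> real \<Rightarrow> real" where
  "laplace_tail \<beta> \<phi> x = integral {x..} (\<lambda>y. exp (- \<beta> * y) * \<phi> y)"

lemma tendsto_exp_neg_at_top:
  fixes \<beta> :: real
  assumes "\<beta> > 0"
  shows "((\<lambda>x. exp (- \<beta> * x)) \<longlongrightarrow> 0) at_top"
proof -
  have "LIM x at_top. \<beta> * x :> at_top"
    by (rule filterlim_tendsto_pos_mult_at_top[OF tendsto_const assms filterlim_ident])
  then have "LIM x at_top. - \<beta> * x :> at_bot" by (simp add: filterlim_uminus_at_top)
  then show ?thesis using filterlim_compose[OF exp_at_bot] by blast
qed

lemma eq_0_if_deriv_0_and_exp_bounded: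
  fixes D :: "real \<Rightarrow> real"
  assumes "\<And>z. (D has_real_derivative 0) (at z)"
    and bound: "\<And>z. \<bar>D z\<bar> \<le> C * exp (- \<beta> * z)" and "\<beta> > 0"
  shows "D x = 0"
proof -
  have "D z = D x" for z using DERIV_isconst_all assms(1) by blast
  then obtain k where k: "D = (\<lambda>_. k)" by fast
  have "\<forall>\<^sub>F z in at_top. norm (D z) \<le> C * exp (- \<beta> * z)"
    using bound by (intro always_eventually allI) simp
  moreover have "((\<lambda>z. C * exp (- \<beta> * z)) \<longlongrightarrow> 0) at_top"
    using tendsto_mult[OF tendsto_const tendsto_exp_neg_at_top[OF \<open>\<beta> > 0\<close>], of C]
    by (simp only: mult_zero_right)
  ultimately have "(D \<longlongrightarrow> 0) at_top" by (rule Lim_null_comparison)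
  then show "D x = 0" unfolding k by (simp add: tendsto_const_iff)
qed

lemma has_integral_exp_mult_exp:
  fixes \<kappa> \<beta> x :: real
  assumes "\<kappa> < \<beta>"
  shows "((\<lambda>y. exp (- \<beta> * y) * exp (\<kappa> * y)) has_integral exp ((\<kappa> - \<beta>) * x) / (\<beta> - \<kappa>)) {x..}"
proof -
  have "exp (- \<beta> * y) * exp (\<kappa> * y) = exp (- (\<beta> - \<kappa>) * y)" for y
    by (simp add: exp_add[symmetric] algebra_simps)
  then show ?thesis using has_integral_exp_minus_to_infinity[of "\<beta> - \<kappa>" x] assms
    by (simp add: algebra_simps)
qed

lemma integrable_exp_mult_if_exp_bounded:
  fixes \<phi> :: "real \<Rightarrow> real"
  assumes cont: "continuous_on UNIV \<phi>" and "\<kappa> < \<beta>"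
    and bound: "\<And>y. y \<ge> x \<Longrightarrow> \<bar>\<phi> y\<bar> \<le> C * exp (\<kappa> * y)"
  shows "(\<lambda>y. exp (- \<beta> * y) * \<phi> y) integrable_on {x..}"
proof (rule measurable_bounded_by_integrable_imp_integrable_real
    [where g = "\<lambda>y. C * (exp (- \<beta> * y) * exp (\<kappa> * y))"])
  have "{x..} \<in> sets lebesgue" using lebesgue_closedin[of UNIV "{x..}"] by simp
  then show "(\<lambda>y. exp (- \<beta> * y) * \<phi> y) \<in> borel_measurable (lebesgue_on {x..})"
    by (intro continuous_imp_measurable_on_sets_lebesgue)
       (auto intro!: continuous_intros continuous_on_subset[OF cont])
  show "(\<lambda>y. C * (exp (- \<beta> * y) * exp (\<kappa> * y))) integrable_on {x..}"
    using has_integral_mult_right[OF has_integral_exp_mult_exp[OF \<open>\<kappa> < \<beta>\<close>, of x], of C]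
    by (auto simp: integrable_on_def)
  show "\<bar>exp (- \<beta> * y) * \<phi> y\<bar> \<le> C * (exp (- \<beta> * y) * exp (\<kappa> * y))" if "y \<in> {x..}" for y
    using bound[of y] that by (simp add: abs_mult mult.left_commute)
qed auto

lemma integrable_exp_mult_if_bounded:
  fixes \<phi> :: "real \<Rightarrow> real"
  assumes "continuous_on UNIV \<phi>" "\<beta> > 0" "\<And>y. \<bar>\<phi> y\<bar> \<le> B"
  shows "(\<lambda>y. exp (- \<beta> * y) * \<phi> y) integrable_on {x..}"
  using integrable_exp_mult_if_exp_bounded[of \<phi> 0 \<beta> x B] assms by simp

lemma laplace_tail_exp:
  "\<kappa> < \<beta> \<Longrightarrow> laplace_tail \<beta> (\<lambda>y. exp (\<kappa> * y)) x = exp ((\<kappa> - \<beta>) * x) / (\<beta> - \<kappa>)"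
  unfolding laplace_tail_def using has_integral_exp_mult_exp by (rule integral_unique)

lemma laplace_tail_diff:
  assumes "(\<lambda>y. exp (- \<beta> * y) * \<phi> y) integrable_on {x..}"
    and "(\<lambda>y. exp (- \<beta> * y) * \<psi> y) integrable_on {x..}"
  shows "laplace_tail \<beta> (\<lambda>y. \<phi> y - \<psi> y) x = laplace_tail \<beta> \<phi> x - laplace_tail \<beta> \<psi> x"
  unfolding laplace_tail_def using integral_diff[OF assms] by (simp add: right_diff_distrib)

lemma laplace_tail_cmult: "laplace_tail \<beta> (\<lambda>y. k * \<phi> y) x = k * laplace_tail \<beta> \<phi> x"
  unfolding laplace_tail_def by (simp add: mult.left_commute)

lemma laplace_tail_mono:
  assumes "(\<lambda>y. exp (- \<beta> * y) * \<phi> y) integrable_on {x..}"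
    and "(\<lambda>y. exp (- \<beta> * y) * \<psi> y) integrable_on {x..}"
    and "\<And>y. y \<ge> x \<Longrightarrow> \<phi> y \<le> \<psi> y"
  shows "laplace_tail \<beta> \<phi> x \<le> laplace_tail \<beta> \<psi> x"
  unfolding laplace_tail_def using assms by (intro integral_le) auto

lemma laplace_tail_nonneg:
  assumes "(\<lambda>y. exp (- \<beta> * y) * \<phi> y) integrable_on {x..}" "\<And>y. y \<ge> x \<Longrightarrow> 0 \<le> \<phi> y"
  shows "0 \<le> laplace_tail \<beta> \<phi> x"
  unfolding laplace_tail_def by (rule integral_nonneg) (use assms in auto)

lemma has_deriv_laplace_tail:
  assumes cont: "continuous_on UNIV \<phi>"
    and int: "\<And>x. (\<lambda>y. exp (- \<beta> * y) * \<phi> y) integrable_on {x..}"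
  shows "(laplace_tail \<beta> \<phi> has_real_derivative - (exp (- \<beta> * x) * \<phi> x)) (at x)"
proof -
  define g where "g y = exp (- \<beta> * y) * \<phi> y" for y
  have cont_g: "continuous_on UNIV g" unfolding g_def by (intro continuous_intros cont)
  define b where "b = x + 1"
  \<comment> \<open>split off the tail beyond \<open>b\<close>, which does not depend on the lower limit\<close>
  have split: "laplace_tail \<beta> \<phi> y = integral {y..b} g + integral {b..} g" if "y \<le> b" for y
  proof -
    have "g integrable_on {y..b}"
      using integrable_continuous_interval continuous_on_subset[OF cont_g] by blast
    moreover have "g integrable_on {b..}" using int unfolding g_def by blast
    moreover have "negligible ({y..b} \<inter> {b..})"
      by (rule negligible_subset[of "{b}"]) auto
    moreover have "{y..} = {y..b} \<union> {b..}" using that by auto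
    ultimately show ?thesis unfolding laplace_tail_def g_def[symmetric] by (simp add: integral_Un)
  qed
  have "((\<lambda>y. integral {y..b} g) has_real_derivative - g x) (at x within {x - 1..b})"
    by (rule integral_has_real_derivative')
      (auto intro: continuous_on_subset[OF cont_g] simp: b_def)
  moreover have "at x within {x - 1..b} = at x" by (rule at_within_Icc_at) (auto simp: b_def)
  ultimately have "((\<lambda>y. integral {y..b} g + integral {b..} g) has_real_derivative - g x) (at x)"
    by (auto intro!: derivative_eq_intros)
  then have "((\<lambda>y. integral {y..b} g + integral {b..} g) has_real_derivative
      - (exp (- \<beta> * x) * \<phi> x)) (at x)"
    by (simp add: g_def)
  then show ?thesis
    by (rule has_field_derivative_transform_within_open[of _ _ _ "{..<b}"])
       (auto simp: b_def split)
qed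

lemma laplace_tail_abs_le:
  assumes cont: "continuous_on UNIV \<phi>" and bound: "\<And>y. \<bar>\<phi> y\<bar> \<le> B" and "\<beta> > 0"
  shows "\<bar>laplace_tail \<beta> \<phi> x\<bar> \<le> B * exp (- \<beta> * x) / \<beta>"
proof -
  have int: "(\<lambda>y. exp (- \<beta> * y) * \<phi> y) integrable_on {x..}"
    using integrable_exp_mult_if_bounded[OF cont \<open>\<beta> > 0\<close> bound] .
  have dom: "((\<lambda>y. B * exp (- \<beta> * y)) has_integral B * exp (- \<beta> * x) / \<beta>) {x..}"
    using has_integral_mult_right[OF has_integral_exp_mult_exp[of 0 \<beta> x], of B] \<open>\<beta> > 0\<close> by simp
  have "laplace_tail \<beta> \<phi> x \<le> B * exp (- \<beta> * x) / \<beta>"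
    unfolding laplace_tail_def
  proof (rule has_integral_le[OF integrable_integral[OF int] dom])
    show "exp (- \<beta> * y) * \<phi> y \<le> B * exp (- \<beta> * y)" for y
      using bound[of y] by (simp add: mult.commute mult_left_mono abs_le_iff)
  qed
  moreover have "- (B * exp (- \<beta> * x) / \<beta>) \<le> laplace_tail \<beta> \<phi> x"
    unfolding laplace_tail_def
  proof (rule has_integral_le[OF has_integral_neg[OF dom] integrable_integral[OF int]])
    show "- (B * exp (- \<beta> * y)) \<le> exp (- \<beta> * y) * \<phi> y" for y
    proof -
      have "- B * exp (- \<beta> * y) \<le> \<phi> y * exp (- \<beta> * y)"
        using bound[of y] by (intro mult_right_mono) (auto simp: abs_le_iff)
      then show ?thesis by (simp add: mult.commute)
    qed
  qed
  ultimately show ?thesis by simp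
qed

lemma laplace_tail_shift:
  assumes cont: "continuous_on UNIV \<phi>" and bound: "\<And>y. \<bar>\<phi> y\<bar> \<le> B" and "\<beta> > 0"
  shows "laplace_tail \<beta> (\<lambda>y. \<phi> (y + s)) x = exp (\<beta> * s) * laplace_tail \<beta> \<phi> (x + s)"
proof -
  have cont_s: "continuous_on UNIV (\<lambda>y. \<phi> (y + s))"
    by (rule continuous_on_compose2[OF cont]) (auto intro!: continuous_intros)
  have int: "(\<lambda>y. exp (- \<beta> * y) * \<phi> y) integrable_on {x..}"
    and int_s: "(\<lambda>y. exp (- \<beta> * y) * \<phi> (y + s)) integrable_on {x..}" for x
    using integrable_exp_mult_if_bounded[OF cont \<open>\<beta> > 0\<close> bound]
      integrable_exp_mult_if_bounded[OF cont_s \<open>\<beta> > 0\<close> bound] by blast+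
  define D where
    "D x = laplace_tail \<beta> (\<lambda>y. \<phi> (y + s)) x - exp (\<beta> * s) * laplace_tail \<beta> \<phi> (x + s)" for x
  have "(D has_real_derivative 0) (at z)" for z
  proof -
    have "((\<lambda>x. x + s) has_real_derivative 1) (at z)" by (auto intro!: derivative_eq_intros)
    from DERIV_chain2[OF has_deriv_laplace_tail[OF cont int] this]
    have "((\<lambda>x. laplace_tail \<beta> \<phi> (x + s)) has_real_derivative
        - (exp (- \<beta> * (z + s)) * \<phi> (z + s))) (at z)"
      by simp
    from DERIV_diff[OF has_deriv_laplace_tail[OF cont_s int_s]
        DERIV_cmult[OF this, of "exp (\<beta> * s)"]]
    have "(D has_real_derivative - (exp (- \<beta> * z) * \<phi> (z + s))
        - exp (\<beta> * s) * - (exp (- \<beta> * (z + s)) * \<phi> (z + s))) (at z)"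
      unfolding D_def .
    moreover have "exp (\<beta> * s) * exp (- \<beta> * (z + s)) = exp (- \<beta> * z)"
      by (simp add: exp_add[symmetric] algebra_simps)
    ultimately show ?thesis
      by (simp only: mult_minus_right diff_minus_eq_add mult.assoc[symmetric]) simp
  qed
  moreover have "\<bar>D z\<bar> \<le> 2 * B / \<beta> * exp (- \<beta> * z)" for z
  proof -
    have "\<bar>exp (\<beta> * s) * laplace_tail \<beta> \<phi> (z + s)\<bar>
        \<le> exp (\<beta> * s) * (B * exp (- \<beta> * (z + s)) / \<beta>)"
      using mult_left_mono[OF laplace_tail_abs_le[OF cont bound \<open>\<beta> > 0\<close>, of "z + s"],
          of "exp (\<beta> * s)"]
      by (simp add: abs_mult)
    also have "\<dots> = B * exp (- \<beta> * z) / \<beta>" by (simp add: exp_add[symmetric] algebra_simps)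
    finally show ?thesis
      using laplace_tail_abs_le[OF cont_s bound \<open>\<beta> > 0\<close>, of z] unfolding D_def by simp
  qed
  ultimately have "D x = 0" using \<open>\<beta> > 0\<close> by (rule eq_0_if_deriv_0_and_exp_bounded)
  then show ?thesis unfolding D_def by simp
qed

lemma tendsto_laplace_tail:
  assumes bound: "\<And>n y. \<bar>\<phi> n y\<bar> \<le> B" and "\<beta> > 0"
    and int: "\<And>n. (\<lambda>y. exp (- \<beta> * y) * \<phi> n y) integrable_on {x..}"
    and conv: "\<And>y. (\<lambda>n. \<phi> n y) \<longlonglongrightarrow> \<psi> y"
  shows "(\<lambda>n. laplace_tail \<beta> (\<phi> n) x) \<longlonglongrightarrow> laplace_tail \<beta> \<psi> x"
  unfolding laplace_tail_def
proof (rule dominated_convergence(2)[OF int])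
  show "(\<lambda>y. B * exp (- \<beta> * y)) integrable_on {x..}"
    using has_integral_mult_right[OF has_integral_exp_mult_exp[of 0 \<beta> x], of B] \<open>\<beta> > 0\<close>
    by (auto simp: integrable_on_def)
  show "norm (exp (- \<beta> * y) * \<phi> n y) \<le> B * exp (- \<beta> * y)" for n y
    using bound[of n y] by (simp add: abs_mult mult.commute)
  show "(\<lambda>n. exp (- \<beta> * y) * \<phi> n y) \<longlonglongrightarrow> exp (- \<beta> * y) * \<psi> y" for y
    by (intro tendsto_mult tendsto_const conv)
qed

lemma laplace_tail_pos:
  assumes cont: "continuous_on UNIV \<phi>"
    and int: "(\<lambda>y. exp (- \<beta> * y) * \<phi> y) integrable_on {x..}"
    and nonneg: "\<And>y. y \<ge> x \<Longrightarrow> 0 \<le> \<phi> y" and "y0 \<ge> x" "\<phi> y0 > 0"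
  shows "laplace_tail \<beta> \<phi> x > 0"
proof -
  define g where "g y = exp (- \<beta> * y) * \<phi> y" for y
  have cont_g: "continuous_on UNIV g" unfolding g_def by (intro continuous_intros cont)
  have "g y0 > 0" unfolding g_def using \<open>\<phi> y0 > 0\<close> by simp
  then have "\<forall>\<^sub>F y in at y0. g y0 / 2 < g y"
    using cont_g by (intro order_tendstoD) (auto simp: continuous_on_eq_continuous_at isCont_def)
  then obtain \<eta> where "\<eta> > 0" and \<eta>: "\<And>y. y \<noteq> y0 \<Longrightarrow> dist y y0 < \<eta> \<Longrightarrow> g y0 / 2 < g y"
    unfolding eventually_at by blast
  define b where "b = y0 + \<eta> / 2"
  have low: "g y0 / 2 \<le> g y" if "y \<in> {y0..b}" for y
    using that \<eta>[of y] \<open>\<eta> > 0\<close> \<open>g y0 > 0\<close> unfolding b_def dist_real_def by (cases "y = y0") auto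
  have int_b: "g integrable_on {y0..b}"
    using integrable_continuous_interval continuous_on_subset[OF cont_g] by blast
  have "((\<lambda>y. g y0 / 2) has_integral (g y0 / 2) * (b - y0)) {y0..b}"
    using has_integral_const_real[of "g y0 / 2" y0 b] \<open>\<eta> > 0\<close> unfolding b_def
    by (simp add: mult.commute)
  then have "(g y0 / 2) * (b - y0) \<le> integral {y0..b} g"
    using has_integral_le[OF _ integrable_integral[OF int_b]] low by blast
  moreover have "0 < (g y0 / 2) * (b - y0)" using \<open>g y0 > 0\<close> \<open>\<eta> > 0\<close> unfolding b_def by simp
  ultimately have "0 < integral {y0..b} g" by linarith
  also have "integral {y0..b} g \<le> integral {x..} g"
    using \<open>y0 \<ge> x\<close> int_b int nonneg unfolding g_def by (intro integral_subset_le) auto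
  finally show ?thesis unfolding laplace_tail_def g_def .
qed

section \<open>Existence of the profile\<close>

lemma abs_diff_le_if_deriv_bounded:
  fixes f f' :: "real \<Rightarrow> real"
  assumes der: "\<And>x. (f has_real_derivative f' x) (at x)" and bound: "\<And>x. \<bar>f' x\<bar> \<le> B"
  shows "\<bar>f x - f y\<bar> \<le> B * \<bar>x - y\<bar>"
proof -
  have le: "\<bar>f u - f v\<bar> \<le> B * \<bar>u - v\<bar>" if uv: "v < u" for u v
  proof -
    obtain z where "f u - f v = (u - v) * f' z" using MVT2[OF uv, of f f'] der by blast
    then have "\<bar>f u - f v\<bar> = \<bar>u - v\<bar> * \<bar>f' z\<bar>" by (simp add: abs_mult)
    also have "\<dots> \<le> \<bar>u - v\<bar> * B" using bound[of z] by (simp add: mult_left_mono)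
    finally show ?thesis by (simp add: mult.commute)
  qed
  show ?thesis
    using le[of x y] le[of y x]
    by (cases x y rule: linorder_cases) (simp_all add: abs_minus_commute)
qed

definition bounded_continuous :: "(real \<Rightarrow> real) \<Rightarrow> bool" where
  "bounded_continuous \<phi> \<longleftrightarrow> continuous_on UNIV \<phi> \<and> (\<exists>B. \<forall>y. \<bar>\<phi> y\<bar> \<le> B)"

lemma continuous_on_reflect:
  fixes \<phi> :: "real \<Rightarrow> real"
  shows "continuous_on UNIV \<phi> \<Longrightarrow> continuous_on UNIV (\<lambda>z. \<phi> (- z))"
  by (rule continuous_on_compose2[of UNIV \<phi>]) (auto intro!: continuous_intros)

text \<open>The wave is built as the decreasing limit of a monotone iteration
  \<open>w\<^sub>n\<^sub>+\<^sub>1 = G (g \<circ> w\<^sub>n)\<close> started at the supersolution \<open>min a e\<^sup>-\<^sup>\<lambda>\<^sup>x\<close>, where \<open>G\<close> inverts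
  \<open>-d w'' - c w' + M w\<close> on bounded functions and \<open>g v = r v (a - v) + M v\<close> with \<open>M = r a\<close> is
  nondecreasing on \<open>[0, a]\<close>. The iterates stay above the subsolution
  \<open>max 0 (e\<^sup>-\<^sup>\<lambda>\<^sup>x - K e\<^sup>-\<^sup>\<lambda>\<^sup>'\<^sup>x)\<close>, which keeps the limit from being trivial; \<open>\<lambda>\<close> is the smaller root
  of \<open>d \<lambda>\<^sup>2 - c \<lambda> + r a = 0\<close>, real because \<open>c\<^sup>2 > 4 d r a\<close>.\<close>

locale kpp_construction =
  fixes d r a c :: real
  assumes d_pos: "d > 0" and r_pos: "r > 0" and a_pos: "a > 0" and c_pos: "c > 0"
    and disc: "c\<^sup>2 > 4 * d * r * a"
begin

definition "M = r * a"
definition "S = sqrt (c\<^sup>2 + 4 * d * M)"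
definition "b1 = (c + S) / (2 * d)"
definition "b2 = (S - c) / (2 * d)"

lemma M_pos: "M > 0"
  unfolding M_def using r_pos a_pos by simp

lemma S_gt_c: "S > c"
proof -
  have "c\<^sup>2 < c\<^sup>2 + 4 * d * M" using d_pos M_pos by simp
  then have "sqrt (c\<^sup>2) < S" unfolding S_def by (rule real_sqrt_less_mono)
  then show ?thesis using c_pos by simp
qed

lemma S_pos: "S > 0"
  using S_gt_c c_pos by simp

lemma b1_pos: "b1 > 0" and b2_pos: "b2 > 0"
  unfolding b1_def b2_def using S_gt_c c_pos d_pos by simp_all

lemma b1_plus_b2: "d * (b1 + b2) = S" and b1_minus_b2: "d * (b1 - b2) = c"
  unfolding b1_def b2_def using d_pos by (simp_all add: field_simps)

lemma b1_times_b2: "d * (b1 * b2) = M"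
proof -
  have "d * (b1 * b2) = (S\<^sup>2 - c\<^sup>2) / (4 * d)"
    unfolding b1_def b2_def using d_pos by (simp add: field_simps power2_eq_square)
  then show ?thesis unfolding S_def using d_pos M_pos by simp
qed

text \<open>\<open>-b1\<close> and \<open>b2\<close> are the roots of \<open>d \<beta>\<^sup>2 + c \<beta> - M\<close>, the characteristic polynomial of
  \<open>-d w'' - c w' + M w = 0\<close>.\<close>

lemma char_root_b1: "d * b1\<^sup>2 - c * b1 - M = 0"
proof -
  have "d * b1\<^sup>2 - c * b1 - M = b1 * (d * b1 - c) - M" by (simp add: algebra_simps power2_eq_square)
  also have "d * b1 - c = d * b2" using b1_minus_b2 by (simp add: algebra_simps)
  finally show ?thesis using b1_times_b2 by (simp add: algebra_simps)
qed

lemma char_root_b2: "d * b2\<^sup>2 + c * b2 - M = 0"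
proof -
  have "d * b2\<^sup>2 + c * b2 - M = b2 * (d * b2 + c) - M" by (simp add: algebra_simps power2_eq_square)
  also have "d * b2 + c = d * b1" using b1_minus_b2 by (simp add: algebra_simps)
  finally show ?thesis using b1_times_b2 by (simp add: algebra_simps)
qed

lemma b1_gt: "b1 > c / d"
proof -
  have "2 * c / (2 * d) < (c + S) / (2 * d)"
    by (rule divide_strict_right_mono) (use S_gt_c d_pos in auto)
  then show ?thesis unfolding b1_def using d_pos by simp
qed

text \<open>\<open>green \<phi> x = (e\<^sup>-\<^sup>b\<^sup>1\<^sup>x \<integral>\<^sub>-\<^sub>\<infinity>\<^sup>x e\<^sup>b\<^sup>1\<^sup>y \<phi> y dy + e\<^sup>b\<^sup>2\<^sup>x \<integral>\<^sub>x\<^sup>\<infinity> e\<^sup>-\<^sup>b\<^sup>2\<^sup>y \<phi> y dy) / S\<close>;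
  the integral over \<open>(-\<infinity>, x]\<close> is written as a tail integral of \<open>\<phi>\<close> reflected.
  \<open>green_comb \<alpha> \<beta>\<close> weights the two halves, which covers \<open>green\<close> and its first two
  derivatives.\<close>

definition green_comb :: "real \<Rightarrow> real \<Rightarrow> (real \<Rightarrow> real) \<Rightarrow> real \<Rightarrow> real" where
  "green_comb \<alpha> \<beta> \<phi> x = (\<alpha> * exp (- b1 * x) * laplace_tail b1 (\<lambda>z. \<phi> (- z)) (- x)
     + \<beta> * exp (b2 * x) * laplace_tail b2 \<phi> x) / S"

definition "green = green_comb 1 1"
definition "green_d1 = green_comb (- b1) b2"
definition "green_d2 \<phi> x = green_comb (b1\<^sup>2) (b2\<^sup>2) \<phi> x - (b1 + b2) * \<phi> x / S"

definition green_integrable :: "(real \<Rightarrow> real) \<Rightarrow> bool" where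
  "green_integrable \<phi> \<longleftrightarrow> (\<forall>x. (\<lambda>y. exp (- b1 * y) * \<phi> (- y)) integrable_on {x..})
     \<and> (\<forall>x. (\<lambda>y. exp (- b2 * y) * \<phi> y) integrable_on {x..})"

lemma green_eq:
  "green \<phi> x = (exp (- b1 * x) * laplace_tail b1 (\<lambda>z. \<phi> (- z)) (- x)
     + exp (b2 * x) * laplace_tail b2 \<phi> x) / S"
  unfolding green_def green_comb_def by simp

lemma green_integrable_if_bounded_continuous:
  assumes "bounded_continuous \<phi>"
  shows "green_integrable \<phi>"
proof -
  obtain B where B: "\<And>y. \<bar>\<phi> y\<bar> \<le> B" and cont: "continuous_on UNIV \<phi>"
    using assms unfolding bounded_continuous_def by blast
  then show ?thesis unfolding green_integrable_def
    using integrable_exp_mult_if_bounded[OF continuous_on_reflect[OF cont] b1_pos, of B]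
      integrable_exp_mult_if_bounded[OF cont b2_pos, of B] by blast
qed

lemma green_integrable_const: "green_integrable (\<lambda>y. k)"
  by (rule green_integrable_if_bounded_continuous) (auto simp: bounded_continuous_def)

lemma green_integrable_exp:
  assumes "\<gamma> \<ge> 0" "\<gamma> < b1"
  shows "green_integrable (\<lambda>y. exp (- \<gamma> * y))"
proof -
  have "(\<lambda>y. exp (- b1 * y) * exp (\<gamma> * y)) integrable_on {x..}" for x
    using has_integral_exp_mult_exp[OF assms(2), of x] by (auto simp: integrable_on_def)
  moreover have "(\<lambda>y. exp (- b2 * y) * exp (- \<gamma> * y)) integrable_on {x..}" for x
    using has_integral_exp_mult_exp[of "- \<gamma>" b2 x] assms b2_pos by (auto simp: integrable_on_def)
  ultimately show ?thesis unfolding green_integrable_def by simp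
qed

lemma green_integrable_diff:
  "green_integrable \<phi> \<Longrightarrow> green_integrable \<psi> \<Longrightarrow> green_integrable (\<lambda>y. \<phi> y - \<psi> y)"
  unfolding green_integrable_def by (auto simp: right_diff_distrib intro!: integrable_diff)

lemma green_integrable_cmult:
  assumes "green_integrable \<phi>"
  shows "green_integrable (\<lambda>y. k * \<phi> y)"
proof -
  have "(\<lambda>y. k *\<^sub>R (exp (- b1 * y) * \<phi> (- y))) integrable_on {x..}"
    and "(\<lambda>y. k *\<^sub>R (exp (- b2 * y) * \<phi> y)) integrable_on {x..}" for x
    using assms unfolding green_integrable_def by (intro integrable_cmul; blast)+
  then show ?thesis unfolding green_integrable_def by (simp add: mult.left_commute[of _ k])
qed

lemma green_diff:
  "green_integrable \<phi> \<Longrightarrow> green_integrable \<psi> \<Longrightarrow> green (\<lambda>y. \<phi> y - \<psi> y) x = green \<phi> x - green \<psi> x"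
  unfolding green_eq green_integrable_def
  by (simp add: laplace_tail_diff[of b1 "\<lambda>z. \<phi> (- z)" "- x" "\<lambda>z. \<psi> (- z)", simplified]
      laplace_tail_diff diff_divide_distrib algebra_simps)

lemma green_cmult: "green (\<lambda>y. k * \<phi> y) x = k * green \<phi> x"
  unfolding green_eq using laplace_tail_cmult[of b1 k "\<lambda>z. \<phi> (- z)"] laplace_tail_cmult[of b2 k \<phi>]
  by (simp add: algebra_simps)

lemma green_mono:
  assumes "green_integrable \<phi>" "green_integrable \<psi>" "\<And>y. \<phi> y \<le> \<psi> y"
  shows "green \<phi> x \<le> green \<psi> x"
proof -
  have "laplace_tail b1 (\<lambda>z. \<phi> (- z)) (- x) \<le> laplace_tail b1 (\<lambda>z. \<psi> (- z)) (- x)"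
    and "laplace_tail b2 \<phi> x \<le> laplace_tail b2 \<psi> x"
    using assms unfolding green_integrable_def by (auto intro: laplace_tail_mono)
  then show ?thesis unfolding green_eq using S_pos
    by (intro divide_right_mono add_mono mult_left_mono) auto
qed

lemma green_exp:
  assumes "\<gamma> \<ge> 0" "\<gamma> < b1"
  shows "green (\<lambda>y. exp (- \<gamma> * y)) x = exp (- \<gamma> * x) / (M + c * \<gamma> - d * \<gamma>\<^sup>2)"
proof -
  have pos: "b1 - \<gamma> > 0" "b2 + \<gamma> > 0" using assms b2_pos by simp_all
  have L: "laplace_tail b1 (\<lambda>z. exp (- \<gamma> * - z)) (- x) = exp ((\<gamma> - b1) * (- x)) / (b1 - \<gamma>)"
    using laplace_tail_exp[OF assms(2), of "- x"] by simp
  have R: "laplace_tail b2 (\<lambda>y. exp (- \<gamma> * y)) x = exp ((- \<gamma> - b2) * x) / (b2 + \<gamma>)"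
    using laplace_tail_exp[of "- \<gamma>" b2 x] assms b2_pos by simp
  have "exp (- b1 * x) * exp ((\<gamma> - b1) * (- x)) = exp (- \<gamma> * x)"
    and "exp (b2 * x) * exp ((- \<gamma> - b2) * x) = exp (- \<gamma> * x)"
    by (simp_all add: exp_add[symmetric] algebra_simps)
  then have "green (\<lambda>y. exp (- \<gamma> * y)) x
      = (exp (- \<gamma> * x) / (b1 - \<gamma>) + exp (- \<gamma> * x) / (b2 + \<gamma>)) / S"
    unfolding green_eq L R by (simp add: mult.assoc[symmetric])
  also have "\<dots> = exp (- \<gamma> * x) * ((b1 + b2) / ((b1 - \<gamma>) * (b2 + \<gamma>) * S))"
    using pos S_pos by (simp add: field_simps)
  also have "(b1 + b2) / ((b1 - \<gamma>) * (b2 + \<gamma>) * S) = 1 / (d * ((b1 - \<gamma>) * (b2 + \<gamma>)))"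
  proof -
    have "Y / (X * (d * Y)) = 1 / (d * X)" if "X \<noteq> 0" "Y \<noteq> 0" for X Y
      using that d_pos by (simp add: field_simps)
    then show ?thesis unfolding b1_plus_b2[symmetric] using b1_pos b2_pos pos by simp
  qed
  also have "d * ((b1 - \<gamma>) * (b2 + \<gamma>)) = d * (b1 * b2) + \<gamma> * (d * (b1 - b2)) - d * \<gamma>\<^sup>2"
    by (simp add: algebra_simps power2_eq_square)
  finally show ?thesis unfolding b1_times_b2 b1_minus_b2 by simp
qed

lemma green_const: "green (\<lambda>y. k) x = k / M"
  using green_cmult[of k "\<lambda>y. exp (- 0 * y)" x] green_exp[of 0 x] b1_pos by simp

lemma has_deriv_green_comb:
  assumes "bounded_continuous \<phi>"
  shows "(green_comb \<alpha> \<beta> \<phi> has_real_derivative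
    green_comb (- b1 * \<alpha>) (b2 * \<beta>) \<phi> x + (\<alpha> - \<beta>) * \<phi> x / S) (at x)"
proof -
  obtain cont: "continuous_on UNIV \<phi>"
    and int: "\<And>x. (\<lambda>y. exp (- b1 * y) * \<phi> (- y)) integrable_on {x..}"
      "\<And>x. (\<lambda>y. exp (- b2 * y) * \<phi> y) integrable_on {x..}"
    using assms green_integrable_if_bounded_continuous[OF assms]
    unfolding bounded_continuous_def green_integrable_def by blast
  have "((\<lambda>x. - x) has_real_derivative - 1) (at x)" by (auto intro!: derivative_eq_intros)
  from DERIV_chain2[OF has_deriv_laplace_tail[OF continuous_on_reflect[OF cont] int(1)] this]
  have L: "((\<lambda>x. laplace_tail b1 (\<lambda>z. \<phi> (- z)) (- x)) has_real_derivative
      exp (b1 * x) * \<phi> x) (at x)"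
    by simp
  have "exp (b1 * x) * exp (- b1 * x) = 1" "exp (- b2 * x) * exp (b2 * x) = 1"
    by (simp_all add: exp_add[symmetric])
  then show ?thesis unfolding green_comb_def[abs_def]
    by (auto intro!: derivative_eq_intros L has_deriv_laplace_tail[OF cont int(2)]
        simp: field_simps S_pos[THEN less_imp_neq, symmetric])
qed

lemma has_deriv_green:
  "bounded_continuous \<phi> \<Longrightarrow> (green \<phi> has_real_derivative green_d1 \<phi> x) (at x)"
  using has_deriv_green_comb[of \<phi> 1 1 x] unfolding green_def green_d1_def by simp

lemma has_deriv_green_d1:
  assumes "bounded_continuous \<phi>"
  shows "(green_d1 \<phi> has_real_derivative green_d2 \<phi> x) (at x)"
proof -
  have "green_comb (- b1 * - b1) (b2 * b2) \<phi> x + (- b1 - b2) * \<phi> x / S = green_d2 \<phi> x"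
    unfolding green_d2_def power2_eq_square using S_pos by (simp add: field_simps)
  then show ?thesis using has_deriv_green_comb[OF assms, of "- b1" b2 x] unfolding green_d1_def
    by simp
qed

lemma green_ode: "- d * green_d2 \<phi> x - c * green_d1 \<phi> x + M * green \<phi> x = \<phi> x"
proof -
  define P Q where "P = exp (- b1 * x) * laplace_tail b1 (\<lambda>z. \<phi> (- z)) (- x)"
    and "Q = exp (b2 * x) * laplace_tail b2 \<phi> x"
  have "- d * green_d2 \<phi> x - c * green_d1 \<phi> x + M * green \<phi> x
      = (- P * (d * b1\<^sup>2 - c * b1 - M) - Q * (d * b2\<^sup>2 + c * b2 - M) + (d * (b1 + b2)) * \<phi> x) / S"
    unfolding green_def green_d1_def green_d2_def green_comb_def P_def Q_def
    using S_pos by (simp add: field_simps)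
  also have "\<dots> = \<phi> x" using char_root_b1 char_root_b2 b1_plus_b2 S_pos by simp
  finally show ?thesis .
qed

lemma green_d1_abs_le:
  assumes cont: "continuous_on UNIV \<phi>" and bound: "\<And>y. \<bar>\<phi> y\<bar> \<le> B"
  shows "\<bar>green_d1 \<phi> x\<bar> \<le> 2 * B / S"
proof -
  have "\<bar>laplace_tail b1 (\<lambda>z. \<phi> (- z)) (- x)\<bar> \<le> B * exp (b1 * x) / b1"
    using laplace_tail_abs_le[OF continuous_on_reflect[OF cont] _ b1_pos, of B "- x"] bound by simp
  from mult_left_mono[OF this, of "b1 * exp (- b1 * x)"]
  have "\<bar>- b1 * exp (- b1 * x) * laplace_tail b1 (\<lambda>z. \<phi> (- z)) (- x)\<bar>
      \<le> b1 * exp (- b1 * x) * (B * exp (b1 * x) / b1)"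
    using b1_pos by (simp add: abs_mult)
  also have "\<dots> = B" using b1_pos by (simp add: exp_minus field_simps)
  finally have 1: "\<bar>- b1 * exp (- b1 * x) * laplace_tail b1 (\<lambda>z. \<phi> (- z)) (- x)\<bar> \<le> B" .
  from mult_left_mono[OF laplace_tail_abs_le[OF cont bound b2_pos, of x], of "b2 * exp (b2 * x)"]
  have "\<bar>b2 * exp (b2 * x) * laplace_tail b2 \<phi> x\<bar> \<le> b2 * exp (b2 * x) * (B * exp (- b2 * x) / b2)"
    using b2_pos by (simp add: abs_mult)
  also have "\<dots> = B" using b2_pos by (simp add: exp_minus field_simps)
  finally have 2: "\<bar>b2 * exp (b2 * x) * laplace_tail b2 \<phi> x\<bar> \<le> B" .
  have "\<bar>green_d1 \<phi> x\<bar> = \<bar>- b1 * exp (- b1 * x) * laplace_tail b1 (\<lambda>z. \<phi> (- z)) (- x)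
      + b2 * exp (b2 * x) * laplace_tail b2 \<phi> x\<bar> / S"
    unfolding green_d1_def green_comb_def using S_pos by simp
  also have "\<dots> \<le> (B + B) / S" using 1 2 S_pos
    by (intro divide_right_mono order.trans[OF abs_triangle_ineq]) auto
  finally show ?thesis by simp
qed

lemma green_shift:
  assumes "bounded_continuous \<phi>"
  shows "green (\<lambda>y. \<phi> (y + s)) x = green \<phi> (x + s)"
proof -
  obtain B where B: "\<And>y. \<bar>\<phi> y\<bar> \<le> B" and cont: "continuous_on UNIV \<phi>"
    using assms unfolding bounded_continuous_def by blast
  have "laplace_tail b1 (\<lambda>y. (\<lambda>z. \<phi> (- z)) (y + - s)) (- x)
      = exp (b1 * - s) * laplace_tail b1 (\<lambda>z. \<phi> (- z)) (- x + - s)"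
    by (rule laplace_tail_shift[OF continuous_on_reflect[OF cont] _ b1_pos]) (use B in auto)
  then have "laplace_tail b1 (\<lambda>z. \<phi> (- z + s)) (- x)
      = exp (- b1 * s) * laplace_tail b1 (\<lambda>z. \<phi> (- z)) (- (x + s))"
    by (simp add: algebra_simps)
  moreover have "laplace_tail b2 (\<lambda>y. \<phi> (y + s)) x = exp (b2 * s) * laplace_tail b2 \<phi> (x + s)"
    by (rule laplace_tail_shift[OF cont B b2_pos])
  moreover have "exp (- b1 * x) * exp (- b1 * s) = exp (- b1 * (x + s))"
    and "exp (b2 * x) * exp (b2 * s) = exp (b2 * (x + s))"
    by (simp_all add: exp_add[symmetric] algebra_simps)
  ultimately show ?thesis unfolding green_eq
    by (simp add: mult.assoc[symmetric] add.commute[of "- _" s] add.commute[of _ s])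
qed

lemma green_pos:
  assumes cont: "continuous_on UNIV \<phi>" and int: "green_integrable \<phi>"
    and nonneg: "\<And>y. 0 \<le> \<phi> y" and "\<phi> y0 > 0"
  shows "green \<phi> x > 0"
proof -
  have int1: "(\<lambda>y. exp (- b1 * y) * \<phi> (- y)) integrable_on {x..}"
    and int2: "(\<lambda>y. exp (- b2 * y) * \<phi> y) integrable_on {x..}" for x
    using int unfolding green_integrable_def by blast+
  have L: "laplace_tail b1 (\<lambda>z. \<phi> (- z)) (- x) \<ge> 0" and R: "laplace_tail b2 \<phi> x \<ge> 0"
    using nonneg by (auto intro!: laplace_tail_nonneg int1 int2)
  have "laplace_tail b2 \<phi> x > 0 \<or> laplace_tail b1 (\<lambda>z. \<phi> (- z)) (- x) > 0"
  proof (cases "y0 \<ge> x")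
    case True
    then show ?thesis using laplace_tail_pos[OF cont int2 _ True \<open>\<phi> y0 > 0\<close>] nonneg by blast
  next
    case False
    then have "- y0 \<ge> - x" by simp
    then show ?thesis
      using laplace_tail_pos[OF continuous_on_reflect[OF cont] int1, of "- x" "- y0"]
        nonneg \<open>\<phi> y0 > 0\<close>
      by auto
  qed
  with L R have "exp (- b1 * x) * laplace_tail b1 (\<lambda>z. \<phi> (- z)) (- x)
      + exp (b2 * x) * laplace_tail b2 \<phi> x > 0"
    by (auto intro: add_pos_nonneg add_nonneg_pos)
  then show ?thesis unfolding green_eq using S_pos by simp
qed

lemma tendsto_green:
  assumes adm: "\<And>n. bounded_continuous (\<phi> n)" and bound: "\<And>n y. \<bar>\<phi> n y\<bar> \<le> B"
    and conv: "\<And>y. (\<lambda>n. \<phi> n y) \<longlonglongrightarrow> \<psi> y"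
  shows "(\<lambda>n. green (\<phi> n) x) \<longlonglongrightarrow> green \<psi> x"
proof -
  have int1: "(\<lambda>y. exp (- b1 * y) * \<phi> n (- y)) integrable_on {x..}"
    and int2: "(\<lambda>y. exp (- b2 * y) * \<phi> n y) integrable_on {x..}" for n x
    using green_integrable_if_bounded_continuous[OF adm] unfolding green_integrable_def by blast+
  have "(\<lambda>n. laplace_tail b1 (\<lambda>z. \<phi> n (- z)) (- x)) \<longlonglongrightarrow> laplace_tail b1 (\<lambda>z. \<psi> (- z)) (- x)"
    by (rule tendsto_laplace_tail[of "\<lambda>n z. \<phi> n (- z)" B b1]) (use bound b1_pos int1 conv in auto)
  moreover have "(\<lambda>n. laplace_tail b2 (\<phi> n) x) \<longlonglongrightarrow> laplace_tail b2 \<psi> x"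
    by (rule tendsto_laplace_tail[of \<phi> B b2]) (use bound b2_pos int2 conv in auto)
  ultimately show ?thesis unfolding green_eq by (intro tendsto_intros) (use S_pos in auto)
qed

definition "disc_root = sqrt (c\<^sup>2 - 4 * d * r * a)"
definition "lam = (c - disc_root) / (2 * d)"
definition "lam2 = (c + disc_root) / (2 * d)"
definition "lam' = lam + min lam (lam2 - lam) / 2"
definition "K = max 1 (r / (c * lam' - d * lam'\<^sup>2 - M))"

lemma disc_root_bounds: "disc_root > 0" "disc_root < c"
proof -
  show "disc_root > 0" unfolding disc_root_def using disc by simp
  have "c\<^sup>2 - 4 * d * r * a < c\<^sup>2" using d_pos r_pos a_pos by simp
  then have "disc_root < sqrt (c\<^sup>2)" unfolding disc_root_def by (rule real_sqrt_less_mono)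
  then show "disc_root < c" using c_pos by simp
qed

lemma lam_pos: "lam > 0" and lam_less_lam2: "lam < lam2" and lam2_less_b1: "lam2 < b1"
proof -
  show "lam > 0" "lam < lam2" unfolding lam_def lam2_def using disc_root_bounds d_pos
    by (simp_all add: divide_strict_right_mono)
  have "(c + disc_root) / (2 * d) < (2 * c) / (2 * d)"
    by (rule divide_strict_right_mono) (use disc_root_bounds d_pos in auto)
  then show "lam2 < b1" unfolding lam2_def using b1_gt d_pos by simp
qed

lemma lam'_bounds: "lam < lam'" "lam' < lam2" "lam' \<le> 2 * lam"
  unfolding lam'_def using lam_pos lam_less_lam2 by (auto simp: min_def field_simps)

lemma lam_lam2_factor: "d * \<mu>\<^sup>2 - c * \<mu> + M = d * ((\<mu> - lam) * (\<mu> - lam2))"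
proof -
  have "lam + lam2 = c / d" unfolding lam_def lam2_def using d_pos by (simp add: field_simps)
  moreover have "d * (lam * lam2) = (c\<^sup>2 - disc_root\<^sup>2) / (4 * d)"
    unfolding lam_def lam2_def using d_pos by (simp add: field_simps power2_eq_square)
  moreover have "disc_root\<^sup>2 = c\<^sup>2 - 4 * d * r * a" unfolding disc_root_def using disc by simp
  ultimately have "d * (lam + lam2) = c" "d * (lam * lam2) = M"
    unfolding M_def using d_pos by simp_all
  moreover have "d * ((\<mu> - lam) * (\<mu> - lam2)) = d * \<mu>\<^sup>2 - d * (lam + lam2) * \<mu> + d * (lam * lam2)"
    by (simp add: algebra_simps power2_eq_square)
  ultimately show ?thesis by simp
qed

lemma green_exp_lam: "green (\<lambda>y. exp (- lam * y)) x = exp (- lam * x) / (2 * M)"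
proof -
  have "M + c * lam - d * lam\<^sup>2 = 2 * M" using lam_lam2_factor[of lam] by simp
  with green_exp[of lam x] show ?thesis using lam_pos lam_less_lam2 lam2_less_b1 by simp
qed

lemma lam'_char_gt: "c * lam' - d * lam'\<^sup>2 > M"
proof -
  have "(lam' - lam) * (lam' - lam2) < 0" using lam'_bounds by (simp add: mult_pos_neg)
  then have "d * ((lam' - lam) * (lam' - lam2)) < 0" using d_pos by (simp add: mult_pos_neg)
  then show ?thesis using lam_lam2_factor[of lam'] by simp
qed

lemma K_bounds: "K \<ge> 1" "r \<le> K * (c * lam' - d * lam'\<^sup>2 - M)"
proof -
  show "K \<ge> 1" unfolding K_def by simp
  have "r / (c * lam' - d * lam'\<^sup>2 - M) \<le> K" unfolding K_def by simp
  then show "r \<le> K * (c * lam' - d * lam'\<^sup>2 - M)" using lam'_char_gt by (simp add: pos_divide_le_eq)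
qed

text \<open>\<open>react\<close> is the shifted reaction \<open>r v (a - v) + M v\<close>, truncated outside \<open>[0, a]\<close> so that it is
  bounded and nondecreasing everywhere.\<close>

definition "sat v = max 0 (min a v)"
definition "react v = r * sat v * (a - sat v) + M * sat v"

lemma sat_bounds: "0 \<le> sat v" "sat v \<le> a"
  unfolding sat_def using a_pos by auto

lemma react_eq: "0 \<le> v \<Longrightarrow> v \<le> a \<Longrightarrow> react v = r * v * (a - v) + M * v"
  unfolding react_def sat_def by simp

lemma react_mono:
  assumes "v \<le> w"
  shows "react v \<le> react w"
proof -
  define x y where "x = sat v" and "y = sat w"
  have "0 \<le> x" "x \<le> y" "y \<le> a" unfolding x_def y_def sat_def using assms a_pos by auto
  moreover have "react w - react v = r * (y - x) * (2 * a - x - y)"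
    unfolding react_def x_def[symmetric] y_def[symmetric] M_def
    by (simp add: algebra_simps power2_eq_square)
  ultimately show ?thesis using r_pos by (smt (verit) mult_nonneg_nonneg)
qed

lemma react_gap: "M * a - react v = r * (a - sat v)\<^sup>2"
  unfolding react_def M_def by (simp add: algebra_simps power2_eq_square)

lemma react_bounds: "0 \<le> react v" "react v \<le> M * a"
proof -
  have "0 \<le> r * sat v * (a - sat v)" "0 \<le> M * sat v"
    using sat_bounds[of v] r_pos M_pos by (auto intro!: mult_nonneg_nonneg)
  then show "0 \<le> react v" unfolding react_def by simp
  have "0 \<le> r * (a - sat v)\<^sup>2" using r_pos by simp
  then show "react v \<le> M * a" using react_gap[of v] by simp
qed

lemma react_less:
  assumes "v < a"
  shows "react v < M * a"
proof -
  have "0 < r * (a - sat v)\<^sup>2" using assms r_pos a_pos unfolding sat_def by auto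
  then show ?thesis using react_gap[of v] by simp
qed

lemma react_le_linear:
  assumes "0 \<le> v"
  shows "react v \<le> 2 * M * v"
proof -
  have "react v = 2 * M * sat v - r * (sat v)\<^sup>2"
    unfolding react_def M_def by (simp add: algebra_simps power2_eq_square)
  also have "\<dots> \<le> 2 * M * sat v" using r_pos by simp
  also have "\<dots> \<le> 2 * M * v" unfolding sat_def using assms M_pos by simp
  finally show ?thesis .
qed

lemma react_ge_quadratic:
  assumes "0 \<le> v"
  shows "2 * M * v - r * v\<^sup>2 \<le> react v"
proof (cases "v \<le> a")
  case True
  then show ?thesis using react_eq[OF assms True] unfolding M_def
    by (simp add: algebra_simps power2_eq_square)
next
  case False
  then have "react v = M * a" using react_gap[of v] a_pos unfolding sat_def by simp
  moreover have "M * a - (2 * M * v - r * v\<^sup>2) = r * (v - a)\<^sup>2"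
    unfolding M_def by (simp add: algebra_simps power2_eq_square)
  moreover have "0 \<le> r * (v - a)\<^sup>2" using r_pos by simp
  ultimately show ?thesis by simp
qed

lemma continuous_on_react: "continuous_on UNIV react"
  unfolding react_def[abs_def] sat_def by (intro continuous_intros)

lemma continuous_on_react_comp: "continuous_on UNIV w \<Longrightarrow> continuous_on UNIV (\<lambda>y. react (w y))"
  by (rule continuous_on_compose2[OF continuous_on_react]) auto

lemma bounded_continuous_react: "continuous_on UNIV w \<Longrightarrow> bounded_continuous (\<lambda>y. react (w y))"
  unfolding bounded_continuous_def using continuous_on_react_comp react_bounds
  by (metis abs_of_nonneg)

lemma green_integrable_react: "continuous_on UNIV w \<Longrightarrow> green_integrable (\<lambda>y. react (w y))"
  by (intro green_integrable_if_bounded_continuous bounded_continuous_react)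

definition "upper y = min a (exp (- lam * y))"
definition "lower y = max 0 (exp (- lam * y) - K * exp (- lam' * y))"

lemma continuous_on_upper: "continuous_on UNIV upper"
  unfolding upper_def[abs_def] by (intro continuous_intros)

lemma continuous_on_lower: "continuous_on UNIV lower"
  unfolding lower_def[abs_def] by (intro continuous_intros)

lemma upper_bounds: "0 < upper y" "upper y \<le> a" "upper y \<le> exp (- lam * y)"
  unfolding upper_def using a_pos by auto

lemma lower_bounds: "0 \<le> lower y" "lower y \<le> exp (- lam * y)"
  unfolding lower_def using K_bounds by auto

lemma green_react_bounds:
  assumes "continuous_on UNIV w"
  shows "0 \<le> green (\<lambda>y. react (w y)) x" "green (\<lambda>y. react (w y)) x \<le> a"
proof -
  have "green (\<lambda>y. 0) x \<le> green (\<lambda>y. react (w y)) x"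
    "green (\<lambda>y. react (w y)) x \<le> green (\<lambda>y. M * a) x"
    using green_integrable_react[OF assms] green_integrable_const
    by (auto intro!: green_mono react_bounds)
  then show "0 \<le> green (\<lambda>y. react (w y)) x" "green (\<lambda>y. react (w y)) x \<le> a"
    using green_const[of 0 x] green_const[of "M * a" x] M_pos by simp_all
qed

lemma green_react_upper_le: "green (\<lambda>y. react (upper y)) x \<le> upper x"
proof -
  have int: "green_integrable (\<lambda>y. 2 * M * exp (- lam * y))"
    using green_integrable_cmult[OF green_integrable_exp[of lam]] lam_pos lam_less_lam2 lam2_less_b1
    by auto
  have "react (upper y) \<le> 2 * M * exp (- lam * y)" for y
  proof -
    have "react (upper y) \<le> 2 * M * upper y" using react_le_linear upper_bounds(1)[of y] by simp
    also have "\<dots> \<le> 2 * M * exp (- lam * y)" using upper_bounds(3)[of y] M_pos by simp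
    finally show ?thesis .
  qed
  then have "green (\<lambda>y. react (upper y)) x \<le> green (\<lambda>y. 2 * M * exp (- lam * y)) x"
    by (intro green_mono[OF green_integrable_react[OF continuous_on_upper] int])
  also have "\<dots> = exp (- lam * x)" using green_cmult green_exp_lam M_pos by simp
  finally show ?thesis
    using green_react_bounds[OF continuous_on_upper, of x] unfolding upper_def by simp
qed

text \<open>Where \<open>lower\<close> is positive we have \<open>y > 0\<close>, hence \<open>lower\<^sup>2 \<le> e\<^sup>-\<^sup>2\<^sup>\<lambda>\<^sup>y \<le> e\<^sup>-\<^sup>\<lambda>\<^sup>'\<^sup>y\<close>, and the
  quadratic loss \<open>r v\<^sup>2\<close> of \<open>react\<close> is absorbed by the extra \<open>r e\<^sup>-\<^sup>\<lambda>\<^sup>'\<^sup>y\<close>.\<close>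

lemma react_lower_ge:
  "2 * M * exp (- lam * y) - (2 * M * K + r) * exp (- lam' * y) \<le> react (lower y)"
proof -
  define v where "v = exp (- lam * y) - K * exp (- lam' * y)"
  have lhs: "2 * M * exp (- lam * y) - (2 * M * K + r) * exp (- lam' * y)
      = 2 * M * v - r * exp (- lam' * y)"
    unfolding v_def by (simp add: algebra_simps)
  show ?thesis
  proof (cases "v \<le> 0")
    case True
    then have "2 * M * v \<le> 0" using M_pos by (simp add: mult_nonneg_nonpos)
    moreover have "react (lower y) = 0" using True unfolding lower_def v_def react_def sat_def
      by simp
    ultimately show ?thesis unfolding lhs by (smt (verit) exp_gt_zero r_pos mult_pos_pos)
  next
    case False
    then have "lower y = v" unfolding lower_def v_def by simp
    have "exp (- lam' * y) \<le> K * exp (- lam' * y)" using K_bounds by simp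
    also have "\<dots> < exp (- lam * y)" using False unfolding v_def by simp
    finally have "lam * y < lam' * y" by simp
    then have "y > 0" using lam'_bounds by (smt (verit) mult_le_cancel_right)
    have "v\<^sup>2 \<le> (exp (- lam * y))\<^sup>2"
      using False K_bounds by (intro power_mono) (auto simp: v_def)
    also have "\<dots> = exp (- (2 * lam) * y)" by (simp add: power2_eq_square exp_add[symmetric])
    also have "\<dots> \<le> exp (- lam' * y)" using lam'_bounds(3) \<open>y > 0\<close> by (simp add: mult_right_mono)
    finally have "r * v\<^sup>2 \<le> r * exp (- lam' * y)" using r_pos by simp
    then show ?thesis using react_ge_quadratic[of v] False \<open>lower y = v\<close> unfolding lhs by simp
  qed
qed

lemma lower_le_green_react: "lower x \<le> green (\<lambda>y. react (lower y)) x"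
proof -
  define C where "C = 2 * M * K + r"
  have int: "green_integrable (\<lambda>y. exp (- lam * y))" "green_integrable (\<lambda>y. exp (- lam' * y))"
    using green_integrable_exp lam_pos lam'_bounds lam_less_lam2 lam2_less_b1 by auto
  have "exp (- lam * x) - C / (M + c * lam' - d * lam'\<^sup>2) * exp (- lam' * x)
      = 2 * M * green (\<lambda>y. exp (- lam * y)) x - C * green (\<lambda>y. exp (- lam' * y)) x"
    using green_exp_lam green_exp[of lam' x] lam_pos lam'_bounds lam_less_lam2 lam2_less_b1 M_pos
    by simp
  also have "\<dots> = green (\<lambda>y. 2 * M * exp (- lam * y) - C * exp (- lam' * y)) x"
    using green_diff[OF green_integrable_cmult[OF int(1)] green_integrable_cmult[OF int(2)]]
    by (simp only: green_cmult)
  also have "\<dots> \<le> green (\<lambda>y. react (lower y)) x"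
    by (rule green_mono[OF green_integrable_diff[OF green_integrable_cmult[OF int(1)]
          green_integrable_cmult[OF int(2)]] green_integrable_react[OF continuous_on_lower]])
      (unfold C_def, rule react_lower_ge)
  finally have "exp (- lam * x) - C / (M + c * lam' - d * lam'\<^sup>2) * exp (- lam' * x)
      \<le> green (\<lambda>y. react (lower y)) x" .
  moreover have "C / (M + c * lam' - d * lam'\<^sup>2) \<le> K"
    using K_bounds(2) M_pos lam'_char_gt unfolding C_def
    by (simp add: pos_divide_le_eq algebra_simps)
  then have "C / (M + c * lam' - d * lam'\<^sup>2) * exp (- lam' * x) \<le> K * exp (- lam' * x)"
    by (rule mult_right_mono) simp
  ultimately show ?thesis
    using green_react_bounds[OF continuous_on_lower, of x] unfolding lower_def by simp
qed

lemma react_lower_le_react_upper: "react (lower y) \<le> react (upper y)"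
proof -
  have "react (lower y) = react (min a (lower y))"
    unfolding react_def sat_def by (simp add: min.assoc)
  also have "\<dots> \<le> react (upper y)"
    using lower_bounds[of y] unfolding upper_def by (intro react_mono) auto
  finally show ?thesis .
qed

primrec iter :: "nat \<Rightarrow> real \<Rightarrow> real" where
  iter_0: "iter 0 = upper"
| iter_Suc: "iter (Suc n) = green (\<lambda>y. react (iter n y))"

lemma continuous_on_iter: "continuous_on UNIV (iter n)"
proof (induction n)
  case (Suc n)
  then have "(iter (Suc n) has_real_derivative green_d1 (\<lambda>y. react (iter n y)) x) (at x)" for x
    unfolding iter_Suc by (intro has_deriv_green bounded_continuous_react)
  then show ?case by (meson DERIV_isCont continuous_at_imp_continuous_on)
qed (simp add: iter_0 continuous_on_upper)

lemma green_react_mono: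
  "(\<And>y. v y \<le> w y) \<Longrightarrow> continuous_on UNIV v \<Longrightarrow> continuous_on UNIV w
    \<Longrightarrow> green (\<lambda>y. react (v y)) x \<le> green (\<lambda>y. react (w y)) x"
  by (intro green_mono green_integrable_react react_mono)

lemma iter_bounds: "0 \<le> iter n y" "iter n y \<le> a"
  using upper_bounds[of y] green_react_bounds[OF continuous_on_iter, of _ y]
  by (cases n; simp add: iter_0 iter_Suc)+

lemma iter_Suc_le: "iter (Suc n) y \<le> iter n y"
proof (induction n arbitrary: y)
  case 0
  then show ?case using green_react_upper_le by (simp add: iter_Suc iter_0)
next
  case (Suc n)
  then have "green (\<lambda>y. react (iter (Suc n) y)) y \<le> green (\<lambda>y. react (iter n y)) y"
    by (intro green_react_mono continuous_on_iter)
  then show ?case by simp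
qed

lemma lower_le_iter_Suc: "lower y \<le> iter (Suc n) y"
proof (induction n arbitrary: y)
  case 0
  have "lower y \<le> green (\<lambda>y. react (lower y)) y" by (rule lower_le_green_react)
  also have "\<dots> \<le> green (\<lambda>y. react (upper y)) y"
    using react_lower_le_react_upper
    by (intro green_mono green_integrable_react continuous_on_lower continuous_on_upper)
  finally show ?case by (simp add: iter_Suc iter_0)
next
  case (Suc n)
  have "lower y \<le> green (\<lambda>y. react (lower y)) y" by (rule lower_le_green_react)
  also have "\<dots> \<le> green (\<lambda>y. react (iter (Suc n) y)) y"
    using Suc by (intro green_react_mono continuous_on_lower continuous_on_iter)
  finally show ?case by (simp add: iter_Suc)
qed

lemma iter_antimono: "s \<ge> 0 \<Longrightarrow> iter n (x + s) \<le> iter n x"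
proof (induction n arbitrary: x)
  case 0
  have "exp (- lam * (x + s)) \<le> exp (- lam * x)" using 0 lam_pos by (simp add: mult_left_mono)
  then show ?case unfolding iter_0 upper_def by (rule min.mono[OF order_refl])
next
  case (Suc n)
  have cont: "continuous_on UNIV (\<lambda>y. iter n (y + s))"
    by (rule continuous_on_compose2[OF continuous_on_iter]) (auto intro!: continuous_intros)
  have "iter (Suc n) (x + s) = green (\<lambda>y. react (iter n (y + s))) x"
    unfolding iter_Suc
    by (rule green_shift[OF bounded_continuous_react[OF continuous_on_iter], symmetric])
  also have "\<dots> \<le> green (\<lambda>y. react (iter n y)) x"
    using Suc by (intro green_react_mono cont continuous_on_iter)
  finally show ?case by (simp add: iter_Suc)
qed

lemma iter_Suc_lipschitz: "\<bar>iter (Suc n) x - iter (Suc n) y\<bar> \<le> 2 * (M * a) / S * \<bar>x - y\<bar>"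
proof (rule abs_diff_le_if_deriv_bounded)
  show "(iter (Suc n) has_real_derivative green_d1 (\<lambda>y. react (iter n y)) x) (at x)" for x
    unfolding iter_Suc by (intro has_deriv_green bounded_continuous_react continuous_on_iter)
  show "\<bar>green_d1 (\<lambda>y. react (iter n y)) x\<bar> \<le> 2 * (M * a) / S" for x
    using react_bounds by (intro green_d1_abs_le continuous_on_react_comp continuous_on_iter) simp
qed

definition wave :: "real \<Rightarrow> real" where
  "wave x = lim (\<lambda>n. iter n x)"

lemma iter_tendsto_wave: "(\<lambda>n. iter n x) \<longlonglongrightarrow> wave x"
proof -
  have "decseq (\<lambda>n. iter n x)" by (rule decseq_SucI) (rule iter_Suc_le)
  with iter_bounds obtain L where "(\<lambda>n. iter n x) \<longlonglongrightarrow> L" using decseq_convergent by metis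
  then show ?thesis unfolding wave_def by (simp add: limI)
qed

lemma iter_Suc_tendsto_wave: "(\<lambda>n. iter (Suc n) x) \<longlonglongrightarrow> wave x"
  using LIMSEQ_Suc[OF iter_tendsto_wave] .

lemma lower_le_wave: "lower x \<le> wave x"
  by (rule LIMSEQ_le_const[OF iter_Suc_tendsto_wave]) (use lower_le_iter_Suc in auto)

lemma wave_le_upper: "wave x \<le> upper x"
proof -
  have "iter n x \<le> upper x" for n
  proof (induction n)
    case (Suc n)
    then show ?case using iter_Suc_le[of n x] by linarith
  qed simp
  then show ?thesis by (intro LIMSEQ_le_const2[OF iter_tendsto_wave]) auto
qed

lemma wave_bounds: "0 \<le> wave x" "wave x \<le> a"
  using LIMSEQ_le_const[OF iter_tendsto_wave] LIMSEQ_le_const2[OF iter_tendsto_wave] iter_bounds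
  by blast+

lemma wave_antimono: "s \<ge> 0 \<Longrightarrow> wave (x + s) \<le> wave x"
  by (rule LIMSEQ_le[OF iter_tendsto_wave iter_tendsto_wave]) (use iter_antimono in auto)

lemma continuous_on_wave: "continuous_on UNIV wave"
proof (rule lipschitz_on_continuous_on)
  show "(2 * (M * a) / S)-lipschitz_on UNIV wave"
  proof (rule lipschitz_onI)
    have "(\<lambda>n. \<bar>iter (Suc n) x - iter (Suc n) y\<bar>) \<longlonglongrightarrow> \<bar>wave x - wave y\<bar>" for x y
      by (intro tendsto_intros iter_Suc_tendsto_wave)
    then show "dist (wave x) (wave y) \<le> 2 * (M * a) / S * dist x y" for x y
      unfolding dist_real_def
      by (rule LIMSEQ_le_const2) (intro exI[of _ 0] allI impI iter_Suc_lipschitz)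
    show "0 \<le> 2 * (M * a) / S" using M_pos a_pos S_pos by simp
  qed
qed

lemma wave_fixpoint: "green (\<lambda>y. react (wave y)) = wave"
proof
  fix x
  have "(\<lambda>n. green (\<lambda>y. react (iter n y)) x) \<longlonglongrightarrow> green (\<lambda>y. react (wave y)) x"
  proof (rule tendsto_green[where B = "M * a"])
    show "bounded_continuous (\<lambda>y. react (iter n y))" for n
      by (rule bounded_continuous_react[OF continuous_on_iter])
    show "\<bar>react (iter n y)\<bar> \<le> M * a" for n y using react_bounds[of "iter n y"] by simp
    show "(\<lambda>n. react (iter n y)) \<longlonglongrightarrow> react (wave y)" for y
      by (rule continuous_on_tendsto_compose[OF continuous_on_react iter_tendsto_wave]) simp_all
  qed
  then have "(\<lambda>n. iter (Suc n) x) \<longlonglongrightarrow> green (\<lambda>y. react (wave y)) x" unfolding iter_Suc .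
  then show "green (\<lambda>y. react (wave y)) x = wave x"
    by (rule LIMSEQ_unique[OF _ iter_Suc_tendsto_wave])
qed

definition "wave_d1 = green_d1 (\<lambda>y. react (wave y))"
definition "wave_d2 = green_d2 (\<lambda>y. react (wave y))"

lemma has_deriv_wave: "(wave has_real_derivative wave_d1 x) (at x)"
  using has_deriv_green[OF bounded_continuous_react[OF continuous_on_wave], of x]
  unfolding wave_fixpoint wave_d1_def .

lemma has_deriv_wave_d1: "(wave_d1 has_real_derivative wave_d2 x) (at x)"
  unfolding wave_d1_def wave_d2_def
  by (rule has_deriv_green_d1[OF bounded_continuous_react[OF continuous_on_wave]])

lemma deriv_wave: "deriv wave = wave_d1" and deriv_wave_d1: "deriv wave_d1 = wave_d2"
  using DERIV_imp_deriv[OF has_deriv_wave] DERIV_imp_deriv[OF has_deriv_wave_d1] by auto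

lemma wave_ode: "- d * wave_d2 x - c * wave_d1 x = r * wave x * (a - wave x)"
proof -
  have "- d * wave_d2 x - c * wave_d1 x + M * wave x = react (wave x)"
    using green_ode[of "\<lambda>y. react (wave y)" x] unfolding wave_d1_def wave_d2_def wave_fixpoint .
  moreover have "react (wave x) = r * wave x * (a - wave x) + M * wave x"
    using react_eq wave_bounds by simp
  ultimately show ?thesis by simp
qed

lemma wave_pos: "wave x > 0"
proof -
  define y where "y = max x (ln K / (lam' - lam) + 1)"
  have "lam' - lam > 0" using lam'_bounds by simp
  moreover have "ln K / (lam' - lam) < y" unfolding y_def by simp
  ultimately have "ln K < (lam' - lam) * y" by (simp add: pos_divide_less_eq mult.commute)
  then have "K < exp ((lam' - lam) * y)"
    using K_bounds(1) by (metis exp_ln exp_less_mono less_le_trans zero_less_one)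
  then have "K * exp (- lam' * y) < exp ((lam' - lam) * y) * exp (- lam' * y)" by simp
  also have "\<dots> = exp (- lam * y)" by (simp add: exp_add[symmetric] algebra_simps)
  finally have "0 < lower y" unfolding lower_def by simp
  also have "\<dots> \<le> wave y" by (rule lower_le_wave)
  also have "\<dots> \<le> wave x" using wave_antimono[of "y - x" x] unfolding y_def by simp
  finally show ?thesis .
qed

lemma wave_tendsto_at_top: "(wave \<longlongrightarrow> 0) at_top"
proof (rule tendsto_sandwich[of "\<lambda>x. 0" wave at_top "\<lambda>x. exp (- lam * x)"])
  show "\<forall>\<^sub>F x in at_top. 0 \<le> wave x" using wave_bounds by simp
  show "\<forall>\<^sub>F x in at_top. wave x \<le> exp (- lam * x)"
    by (intro always_eventually allI order.trans[OF wave_le_upper upper_bounds(3)])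
  show "((\<lambda>x. exp (- lam * x)) \<longlongrightarrow> 0) at_top" by (rule tendsto_exp_neg_at_top[OF lam_pos])
qed (rule tendsto_const)

lemma wave_less: "wave x < a"
proof -
  have "\<forall>\<^sub>F y in at_top. wave y < a" using wave_tendsto_at_top a_pos by (intro order_tendstoD) auto
  then obtain y0 where y0: "wave y0 < a" unfolding eventually_at_top_linorder by auto
  \<comment> \<open>\<open>a - wave\<close> is the Green transform of \<open>M a - react \<circ> wave\<close>, which is nonnegative
      and positive at \<open>y\<^sub>0\<close>\<close>
  have "0 < green (\<lambda>y. M * a - react (wave y)) x"
    using react_bounds react_less[OF y0]
    by (intro green_pos continuous_intros continuous_on_react_comp continuous_on_wave
        green_integrable_diff green_integrable_const green_integrable_react) auto
  also have "\<dots> = a - wave x"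
    using green_diff[OF green_integrable_const green_integrable_react[OF continuous_on_wave]]
      green_const[of "M * a"] M_pos wave_fixpoint by simp
  finally show ?thesis by simp
qed

end

lemma (in kpp_construction) monotone_front_wave: "monotone_front d r a c wave"
proof
  show "(wave has_real_derivative deriv wave x) (at x)"
    and "(deriv wave has_real_derivative deriv (deriv wave) x) (at x)"
    and "- d * deriv (deriv wave) x - c * deriv wave x = r * wave x * (a - wave x)" for x
    unfolding deriv_wave deriv_wave_d1 by (fact has_deriv_wave has_deriv_wave_d1 wave_ode)+
  show "wave y \<le> wave x" if "x \<le> y" for x y
    using wave_antimono[of "y - x" x] that by simp
qed (use d_pos r_pos c_pos wave_pos wave_less wave_tendsto_at_top in auto)

lemma speed_above_minimal:
  assumes "d > 0" "r > 0" "0 \<le> \<delta>" "c > 2 * sqrt (r * d)"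
  shows "c > 0" and "c\<^sup>2 > 4 * d * r * (1 - \<delta>)"
proof -
  have "sqrt (r * d) \<ge> 0" using assms by simp
  then show "c > 0" using assms(4) by linarith
  have "4 * (r * d) = (2 * sqrt (r * d))\<^sup>2" using assms by (simp add: power_mult_distrib)
  also have "\<dots> < c\<^sup>2" using assms(4) \<open>sqrt (r * d) \<ge> 0\<close> by (intro power_strict_mono) auto
  moreover have "0 \<le> \<delta> * (4 * d * r)" using assms by simp
  ultimately show "c\<^sup>2 > 4 * d * r * (1 - \<delta>)" by (simp add: algebra_simps)
qed

lemma is_tw_profile_exists:
  assumes "d > 0" "r > 0" "0 \<le> \<delta>" "\<delta> < 1" "c > 2 * sqrt (r * d)"
  shows "\<exists>p. is_tw_profile d r \<delta> c p"
proof -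
  interpret kpp_construction d r "1 - \<delta>" c
    using assms speed_above_minimal[OF assms(1-3,5)] by unfold_locales auto
  interpret W: monotone_front d r "1 - \<delta>" c wave by (rule monotone_front_wave)
  obtain x0 where "wave x0 = (1 - \<delta>) / 2" using W.surj_onto_range[of "(1 - \<delta>) / 2"] assms by auto
  then have "is_tw_profile d r \<delta> c (\<lambda>x. wave (x + x0))"
    by (intro monotone_front_imp_is_tw_profile W.shift) simp
  then show ?thesis by blast
qed

lemma tw_profile_is_tw_profile:
  assumes "d > 0" "r > 0" "0 \<le> \<delta>" "\<delta> < 1" "c > 2 * sqrt (r * d)"
  shows "is_tw_profile d r \<delta> c (tw_profile d r \<delta> c)"
proof -
  have "c \<ge> 0" using speed_above_minimal[OF assms(1-3,5)] by simp
  with assms is_tw_profile_exists is_tw_profile_unique[OF assms(1,2)]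
  have "\<exists>!p. is_tw_profile d r \<delta> c p" by metis
  then show ?thesis unfolding tw_profile_def by (rule theI')
qed

section \<open>The perturbed profile\<close>

context monotone_front
begin

lemma perturbed_subsolution:
  assumes "w 0 = a / 2" "h \<ge> 0" "r * h * \<xi>\<^sup>2 \<le> c"
  shows "- d * deriv (deriv (\<lambda>\<xi>. w \<xi> + h * \<xi>)) \<xi> - c * deriv (\<lambda>\<xi>. w \<xi> + h * \<xi>) \<xi>
    \<le> r * (w \<xi> + h * \<xi>) * (a - (w \<xi> + h * \<xi>))"
proof -
  \<comment> \<open>\<open>w - a/2\<close> has the sign of \<open>-\<xi>\<close>, so the cross term \<open>r h \<xi> (a - 2w)\<close> is nonnegative\<close>
  have "0 \<le> \<xi> * (a - 2 * w \<xi>)"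
    using antimono[of 0 \<xi>] antimono[of \<xi> 0] assms(1)
    by (cases "\<xi> \<ge> 0") (auto intro: mult_nonpos_nonpos)
  then have "0 \<le> r * (\<xi> * (a - 2 * w \<xi>)) + (c - r * h * \<xi>\<^sup>2)"
    using assms(3) r_pos by simp
  then have "0 \<le> h * (r * (\<xi> * (a - 2 * w \<xi>)) + (c - r * h * \<xi>\<^sup>2))"
    using assms(2) by simp
  moreover have "deriv (\<lambda>\<xi>. w \<xi> + h * \<xi>) = (\<lambda>\<xi>. deriv w \<xi> + h)"
    by (intro ext DERIV_imp_deriv) (auto intro!: derivative_eq_intros has_deriv)
  moreover have "deriv (\<lambda>\<xi>. deriv w \<xi> + h) \<xi> = deriv (deriv w) \<xi>"
    by (intro DERIV_imp_deriv) (auto intro!: derivative_eq_intros has_deriv2)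
  ultimately show ?thesis using ode[of \<xi>] by (simp add: algebra_simps power2_eq_square)
qed

lemma perturbation_peak:
  assumes "w 0 = a / 2" "c > 0" "\<epsilon> > 0"
  obtains T where "T > 0" and "\<And>t. T \<le> t \<Longrightarrow>
    a - \<epsilon> < w (- t) - c / (4 * r * t) \<and> a / 2 < w (- t) - c / (4 * r * t) \<and>
    w (- (2 * t)) - c / (2 * r * t) < w (- t) - c / (4 * r * t)"
proof -
  define e where "e = min \<epsilon> (a / 2) / 2"
  have "a > 0" using assms(1) pos[of 0] by simp
  then have "e > 0" unfolding e_def using assms by simp
  obtain T1 where T1: "\<And>t. T1 \<le> t \<Longrightarrow> a - e < w (- t)"
  proof -
    have "\<forall>\<^sub>F x in at_bot. a - e < w x" using tendsto_at_bot \<open>e > 0\<close> by (intro order_tendstoD) auto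
    then obtain X where "\<And>x. x \<le> X \<Longrightarrow> a - e < w x" unfolding eventually_at_bot_linorder by auto
    then show ?thesis using that[of "- X"] by force
  qed
  obtain T2 where "T2 > 0" and T2: "\<And>t. T2 \<le> t \<Longrightarrow> t * (a - w (- t)) < c / (4 * r)"
    using tail_estimate[of "c / (4 * r)"] assms r_pos by auto
  define T where "T = max (max T1 T2) (c / (4 * r * e))"
  have "a - \<epsilon> < w (- t) - c / (4 * r * t) \<and> a / 2 < w (- t) - c / (4 * r * t) \<and>
    w (- (2 * t)) - c / (2 * r * t) < w (- t) - c / (4 * r * t)" if "T \<le> t" for t
  proof -
    have "t > 0" "t \<ge> T1" "t \<ge> T2" "c / (4 * r * e) \<le> t" using that \<open>T2 > 0\<close> unfolding T_def by auto
    then have small: "c / (4 * r * t) \<le> e"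
      using r_pos \<open>e > 0\<close> by (simp add: field_simps)
    have "a - w (- t) < c / (4 * r * t)"
      using T2[OF \<open>t \<ge> T2\<close>] \<open>t > 0\<close> r_pos by (simp add: field_simps)
    moreover have "w (- (2 * t)) < a" by (rule less)
    moreover have "c / (2 * r * t) = 2 * (c / (4 * r * t))" by simp
    moreover have "e \<le> \<epsilon> / 2" "e \<le> a / 4" unfolding e_def by auto
    ultimately show ?thesis using T1[OF \<open>t \<ge> T1\<close>] small by linarith
  qed
  moreover have "T > 0" using \<open>T2 > 0\<close> unfolding T_def by simp
  ultimately show ?thesis using that by blast
qed

lemma perturbed_max_interior:
  assumes "w 0 = a / 2" "c > 0" "\<epsilon> > 0"
  obtains hs where "hs > 0" and "\<And>h. h \<in> {0<..hs} \<Longrightarrow>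
    a - \<epsilon> \<le> Sup ((\<lambda>\<xi>. w \<xi> + h * \<xi>) ` {- sqrt (c / (r * h)) .. 0}) \<and>
    max (w 0 + h * 0) (w (- sqrt (c / (r * h))) + h * - sqrt (c / (r * h)))
      < Sup ((\<lambda>\<xi>. w \<xi> + h * \<xi>) ` {- sqrt (c / (r * h)) .. 0})"
proof -
  obtain T where "T > 0" and T: "\<And>t. T \<le> t \<Longrightarrow>
    a - \<epsilon> < w (- t) - c / (4 * r * t) \<and> a / 2 < w (- t) - c / (4 * r * t) \<and>
    w (- (2 * t)) - c / (2 * r * t) < w (- t) - c / (4 * r * t)"
    using perturbation_peak[OF assms] by blast
  define hs where "hs = c / (4 * r * T\<^sup>2)"
  have "hs > 0" unfolding hs_def using assms r_pos \<open>T > 0\<close> by simp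
  moreover have "a - \<epsilon> \<le> Sup (q ` {- L .. 0}) \<and> max (q 0) (q (- L)) < Sup (q ` {- L .. 0})"
    if "h \<in> {0<..hs}" "q = (\<lambda>\<xi>. w \<xi> + h * \<xi>)" "L = sqrt (c / (r * h))" for h q L
  proof -
    \<comment> \<open>the witness is the midpoint \<open>-t = -L/2\<close>, where \<open>h t = c/(4 r t)\<close>\<close>
    define t where "t = L / 2"
    have "h > 0" "h \<le> hs" using that by auto
    have L2: "L\<^sup>2 = c / (r * h)" "L > 0" unfolding that(3) using assms r_pos \<open>h > 0\<close> by auto
    have "(2 * T)\<^sup>2 = c / (r * hs)" unfolding hs_def using assms r_pos \<open>T > 0\<close>
      by (simp add: field_simps)
    also have "\<dots> \<le> L\<^sup>2" unfolding L2
      using \<open>h > 0\<close> \<open>h \<le> hs\<close> assms r_pos by (intro divide_left_mono mult_pos_pos) auto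
    finally have "T \<le> t" unfolding t_def using L2(2) power2_le_imp_le[of "2 * T" L] by simp
    have "t > 0" using L2 unfolding t_def by simp
    have ht: "h * t = c / (4 * r * t)"
      using L2 \<open>h > 0\<close> r_pos unfolding t_def by (simp add: field_simps power2_eq_square)
    have q_t: "q (- t) = w (- t) - c / (4 * r * t)" using ht that(2) by simp
    have q_L: "q (- L) = w (- (2 * t)) - c / (2 * r * t)"
      using ht \<open>t > 0\<close> r_pos that(2) unfolding t_def by (simp add: field_simps)
    have "continuous_on {- L .. 0} q"
      unfolding that(2) by (intro continuous_at_imp_continuous_on ballI continuous_intros isCont)
    then have "bdd_above (q ` {- L .. 0})"
      by (intro bounded_imp_bdd_above compact_imp_bounded compact_continuous_image) auto
    then have "q (- t) \<le> Sup (q ` {- L .. 0})"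
      using \<open>t > 0\<close> unfolding t_def by (intro cSup_upper) auto
    moreover have "q 0 = a / 2" using that(2) assms(1) by simp
    ultimately show ?thesis using T[OF \<open>T \<le> t\<close>] q_t q_L by auto
  qed
  ultimately show ?thesis using that by blast
qed

end

theorem lemma4p9:
  fixes d r \<delta> c :: real
  assumes "d > 0" and "r > 0"
    and "0 < \<delta>" and "\<delta> < 1"
    and "c > 2 * sqrt (r * d)"
  shows "(\<forall>h>0. \<forall>\<xi>\<in>{- sqrt (c / (r * h)) .. sqrt (c / (r * h))}.
            - d * deriv (deriv (tw_profile_h d r \<delta> c h)) \<xi>
              - c * deriv (tw_profile_h d r \<delta> c h) \<xi>
            \<le> r * tw_profile_h d r \<delta> c h \<xi> * (1 - \<delta> - tw_profile_h d r \<delta> c h \<xi>))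
    \<and> (\<exists>hs>0. \<forall>h\<in>{0<..hs}.
          Sup (tw_profile_h d r \<delta> c h ` {- sqrt (c / (r * h)) .. 0}) \<ge> 1 - 2 * \<delta> \<and>
          Sup (tw_profile_h d r \<delta> c h ` {- sqrt (c / (r * h)) .. 0}) >
            max (tw_profile_h d r \<delta> c h 0)
                (tw_profile_h d r \<delta> c h (- sqrt (c / (r * h)))))"
proof -
  have "0 \<le> \<delta>" using assms(3) by simp
  then have "c > 0" by (rule speed_above_minimal(1)[OF assms(1,2) _ assms(5)])
  have tw: "is_tw_profile d r \<delta> c (tw_profile d r \<delta> c)"
    using tw_profile_is_tw_profile[OF assms(1,2) \<open>0 \<le> \<delta>\<close> assms(4,5)] .
  interpret monotone_front d r "1 - \<delta>" c "tw_profile d r \<delta> c"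
    using is_tw_profile_imp_monotone_front[OF assms(1,2) _ tw] \<open>c > 0\<close> by simp
  have mid: "tw_profile d r \<delta> c 0 = (1 - \<delta>) / 2" using tw unfolding is_tw_profile_def by blast
  have bound: "r * h * \<xi>\<^sup>2 \<le> c"
    if "h > 0" "\<xi> \<in> {- sqrt (c / (r * h)) .. sqrt (c / (r * h))}" for h \<xi>
  proof -
    have "\<xi>\<^sup>2 \<le> (sqrt (c / (r * h)))\<^sup>2" using that by (intro abs_le_square_iff[THEN iffD1]) auto
    then show ?thesis using that(1) \<open>c > 0\<close> assms(2) by (simp add: field_simps)
  qed
  have "- d * deriv (deriv (tw_profile_h d r \<delta> c h)) \<xi> - c * deriv (tw_profile_h d r \<delta> c h) \<xi>
      \<le> r * tw_profile_h d r \<delta> c h \<xi> * (1 - \<delta> - tw_profile_h d r \<delta> c h \<xi>)"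
    if "h > 0" "\<xi> \<in> {- sqrt (c / (r * h)) .. sqrt (c / (r * h))}" for h \<xi>
    unfolding tw_profile_h_def using that
    by (intro perturbed_subsolution[OF mid] bound less_imp_le)
  moreover obtain hs where "hs > 0" and "\<And>h. h \<in> {0<..hs} \<Longrightarrow>
    1 - \<delta> - \<delta> \<le> Sup (tw_profile_h d r \<delta> c h ` {- sqrt (c / (r * h)) .. 0}) \<and>
    max (tw_profile_h d r \<delta> c h 0) (tw_profile_h d r \<delta> c h (- sqrt (c / (r * h))))
      < Sup (tw_profile_h d r \<delta> c h ` {- sqrt (c / (r * h)) .. 0})"
    using perturbed_max_interior[OF mid \<open>c > 0\<close> \<open>\<delta> > 0\<close>] unfolding tw_profile_h_def by blast
  ultimately show ?thesis by (smt (verit))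
qed

end
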